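(* Let $G$ be a cubic near-bipartite brick with at least six vertices. Then $G$ has a $K_4$-decomposition if and only if $G$ is a tri-ladder.
   Context: Graphs may have multiple edges but no loops. An edge is admissible if it lies in some perfect matching; a connected graph with at least two vertices is matching covered if every edge is admissible. A brick is a 3-connected nonbipartite graph $G$ such that $G-x-y$ has a perfect matching for all distinct $x,y$. A nonbipartite matching covered graph $G$ is near-bipartite if it has a pair of edges $\{e_1,e_2\}$ such that $G-\{e_1,e_2\}$ is bipartite matching covered. For $X\subseteq V(G)$, $\overline{X}=V(G)\setminus X$ and $\partial(X)$ is the set of edges with exactly one end in $X$; the cut is nontrivial if $|X|,|\overline X|\ge 2$. $G/X$ is obtained by contracting $X$ to a single vertex $x$ (removing edges inside $X$), $G/\overline X$ similarly with vertex $\overline x$; these are the $\partial(X)$-contractions, and $G$ is a splicing of $G/X$ and $G/\overline{X}$ at $x$ and $\overline{x}$. A 3-cut-decomposition of a 3-connected cubic graph is obtained by repeatedly choosing a graph in the current list that has a nontrivial 3-cut $C$ and replacing it by its two $C$-contractions, until no graph in the list has a nontrivial 3-cut; it is a $K_4$-decomposition if the final list consists only of copies of $K_4$. A graph has a $K_4$-decomposition if some 3-cut-decomposition of it is a $K_4$-decomposition. $\overline{C_6}$ denotes the complement of the 6-cycle (the triangular prism). A graph $G$ is a tri-ladder if there is a sequence $G_0,\dots,G_r$ ($r\ge0$) with $G_0=\overline{C_6}$, $G_r=G$, and for $1\le i\le r$, $G_i$ is a splicing of $G_{i-1}$ and $K_4$ at a vertex of $G_{i-1}$ lying in a triangle of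 $G_{i-1}$ and a vertex of $K_4$. *)

theory Defs
  imports Main
begin

text \<open>A graph has a vertex set, an edge set, and an end-function assigning to each
edge its (two-element) set of ends. Parallel edges are allowed; loops are not.\<close>

record ('v, 'e) mgraph =
  gV :: "'v set"
  gE :: "'e set"
  ends :: "'e \<Rightarrow> 'v set"

definition wf_graph :: "('v, 'e) mgraph \<Rightarrow> bool" where
  "wf_graph G \<longleftrightarrow> finite (gV G) \<and> finite (gE G) \<and>
     (\<forall>e\<in>gE G. ends G e \<subseteq> gV G \<and> card (ends G e) = 2)"

definition degree :: "('v, 'e) mgraph \<Rightarrow> 'v \<Rightarrow> nat" where
  "degree G v = card {e \<in> gE G. v \<in> ends G e}"

definition cubic :: "('v, 'e) mgraph \<Rightarrow> bool" where
  "cubic G \<longleftrightarrow> (\<forall>v\<in>gV G. degree G v = 3)"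

definition adj :: "('v, 'e) mgraph \<Rightarrow> 'v \<Rightarrow> 'v \<Rightarrow> bool" where
  "adj G u v \<longleftrightarrow> (\<exists>e\<in>gE G. ends G e = {u, v})"

definition connected :: "('v, 'e) mgraph \<Rightarrow> bool" where
  "connected G \<longleftrightarrow> gV G \<noteq> {} \<and> (\<forall>u\<in>gV G. \<forall>v\<in>gV G. (adj G)\<^sup>*\<^sup>* u v)"

definition delete_verts :: "('v, 'e) mgraph \<Rightarrow> 'v set \<Rightarrow> ('v, 'e) mgraph" where
  "delete_verts G S = \<lparr>gV = gV G - S, gE = {e \<in> gE G. ends G e \<inter> S = {}}, ends = ends G\<rparr>"

definition delete_edges :: "('v, 'e) mgraph \<Rightarrow> 'e set \<Rightarrow> ('v, 'e) mgraph" where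
  "delete_edges G F = \<lparr>gV = gV G, gE = gE G - F, ends = ends G\<rparr>"

definition k_connected :: "nat \<Rightarrow> ('v, 'e) mgraph \<Rightarrow> bool" where
  "k_connected k G \<longleftrightarrow> card (gV G) > k \<and>
     (\<forall>S. S \<subseteq> gV G \<and> card S < k \<longrightarrow> connected (delete_verts G S))"

definition bipartite :: "('v, 'e) mgraph \<Rightarrow> bool" where
  "bipartite G \<longleftrightarrow> (\<exists>A \<subseteq> gV G. \<forall>e\<in>gE G. card (ends G e \<inter> A) = 1)"

definition perfect_matching :: "('v, 'e) mgraph \<Rightarrow> 'e set \<Rightarrow> bool" where
  "perfect_matching G M \<longleftrightarrow> M \<subseteq> gE G \<and>
     (\<forall>v\<in>gV G. \<exists>!e. e \<in> M \<and> v \<in> ends G e)"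

definition has_perfect_matching :: "('v, 'e) mgraph \<Rightarrow> bool" where
  "has_perfect_matching G \<longleftrightarrow> (\<exists>M. perfect_matching G M)"

definition admissible :: "('v, 'e) mgraph \<Rightarrow> 'e \<Rightarrow> bool" where
  "admissible G e \<longleftrightarrow> (\<exists>M. perfect_matching G M \<and> e \<in> M)"

definition matching_covered :: "('v, 'e) mgraph \<Rightarrow> bool" where
  "matching_covered G \<longleftrightarrow> connected G \<and> card (gV G) \<ge> 2 \<and>
     (\<forall>e\<in>gE G. admissible G e)"

definition brick :: "('v, 'e) mgraph \<Rightarrow> bool" where
  "brick G \<longleftrightarrow> k_connected 3 G \<and> \<not> bipartite G \<and>
     (\<forall>x\<in>gV G. \<forall>y\<in>gV G. x \<noteq> y \<longrightarrow> has_perfect_matching (delete_verts G {x, y}))"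

definition near_bipartite :: "('v, 'e) mgraph \<Rightarrow> bool" where
  "near_bipartite G \<longleftrightarrow> \<not> bipartite G \<and> matching_covered G \<and>
     (\<exists>e1\<in>gE G. \<exists>e2\<in>gE G. e1 \<noteq> e2 \<and>
        bipartite (delete_edges G {e1, e2}) \<and> matching_covered (delete_edges G {e1, e2}))"

definition iso :: "('v, 'e) mgraph \<Rightarrow> ('w, 'f) mgraph \<Rightarrow> bool" where
  "iso G H \<longleftrightarrow> (\<exists>f g. bij_betw f (gV G) (gV H) \<and> bij_betw g (gE G) (gE H) \<and>
     (\<forall>e\<in>gE G. ends H (g e) = f ` ends G e))"

definition iso_at :: "('v, 'e) mgraph \<Rightarrow> 'v \<Rightarrow> ('w, 'f) mgraph \<Rightarrow> 'w \<Rightarrow> bool" where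
  "iso_at G u H u' \<longleftrightarrow> (\<exists>f g. bij_betw f (gV G) (gV H) \<and> bij_betw g (gE G) (gE H) \<and>
     (\<forall>e\<in>gE G. ends H (g e) = f ` ends G e) \<and> f u = u')"

definition cut :: "('v, 'e) mgraph \<Rightarrow> 'v set \<Rightarrow> 'e set" where
  "cut G X = {e \<in> gE G. card (ends G e \<inter> X) = 1}"

text \<open>The vertex representing the contracted set X (a chosen element of X).\<close>
definition rep :: "'v set \<Rightarrow> 'v" where
  "rep X = (SOME x. x \<in> X)"

definition contract :: "('v, 'e) mgraph \<Rightarrow> 'v set \<Rightarrow> ('v, 'e) mgraph" where
  "contract G X = \<lparr>gV = (gV G - X) \<union> {rep X},
                   gE = {e \<in> gE G. \<not> ends G e \<subseteq> X},
                   ends = (\<lambda>e. (\<lambda>w. if w \<in> X then rep X else w) ` ends G e)\<rparr>"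

definition nontrivial_3cut :: "('v, 'e) mgraph \<Rightarrow> 'v set \<Rightarrow> bool" where
  "nontrivial_3cut G X \<longleftrightarrow> X \<subseteq> gV G \<and> card X \<ge> 2 \<and> card (gV G - X) \<ge> 2 \<and>
     card (cut G X) = 3"

text \<open>G is a splicing of H (at u) and K (at v): for some X, G/X is H with the
contraction vertex x corresponding to u, and G/(complement of X) is K with the
contraction vertex corresponding to v.\<close>
definition splicing :: "('v, 'e) mgraph \<Rightarrow> ('w, 'f) mgraph \<Rightarrow> 'w \<Rightarrow>
                        ('x, 'y) mgraph \<Rightarrow> 'x \<Rightarrow> bool" where
  "splicing G H u K v \<longleftrightarrow> (\<exists>X. X \<subseteq> gV G \<and> X \<noteq> {} \<and> gV G - X \<noteq> {} \<and>
     iso_at (contract G X) (rep X) H u \<and>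
     iso_at (contract G (gV G - X)) (rep (gV G - X)) K v)"

definition K4 :: "(nat, nat \<times> nat) mgraph" where
  "K4 = \<lparr>gV = {0..<4}, gE = {(i, j). i < j \<and> j < 4}, ends = (\<lambda>(i, j). {i, j})\<rparr>"

text \<open>Complement of the 6-cycle 0-1-2-3-4-5-0 (the triangular prism).\<close>
definition C6bar :: "(nat, nat \<times> nat) mgraph" where
  "C6bar = \<lparr>gV = {0..<6},
            gE = {(i, j). i < j \<and> j < 6 \<and> j - i \<noteq> 1 \<and> j - i \<noteq> 5},
            ends = (\<lambda>(i, j). {i, j})\<rparr>"

definition dec_step :: "('v, 'e) mgraph list \<Rightarrow> ('v, 'e) mgraph list \<Rightarrow> bool" where
  "dec_step Ls Ls' \<longleftrightarrow> (\<exists>xs H ys X. Ls = xs @ H # ys \<and> nontrivial_3cut H X \<and>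
      Ls' = xs @ contract H X # contract H (gV H - X) # ys)"

definition has_K4_decomposition :: "('v, 'e) mgraph \<Rightarrow> bool" where
  "has_K4_decomposition G \<longleftrightarrow> (\<exists>L. dec_step\<^sup>*\<^sup>* [G] L \<and>
      (\<forall>H\<in>set L. \<not> (\<exists>X. nontrivial_3cut H X)) \<and>
      (\<forall>H\<in>set L. iso H K4))"

definition in_triangle :: "('v, 'e) mgraph \<Rightarrow> 'v \<Rightarrow> bool" where
  "in_triangle G u \<longleftrightarrow> (\<exists>v w. u \<noteq> v \<and> v \<noteq> w \<and> u \<noteq> w \<and>
      adj G u v \<and> adj G v w \<and> adj G u w)"

inductive tri_ladder :: "('v, 'e) mgraph \<Rightarrow> bool" where
  base: "iso G C6bar \<Longrightarrow> tri_ladder G"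
| step: "tri_ladder H \<Longrightarrow> u \<in> gV H \<Longrightarrow> in_triangle H u \<Longrightarrow> v \<in> gV K4 \<Longrightarrow>
         splicing G H u K4 v \<Longrightarrow> tri_ladder G"

end

theory Submission
  imports Defs
begin

text \<open>Contracting either shore of a nontrivial 3-cut of a cubic graph gives a cubic graph again,
so a \<open>K\<^sub>4\<close>-decomposition is a binary tree of cut-contractions with \<open>K\<^sub>4\<close> leaves; this is the
inductive predicate \<open>K4_decomposable\<close>. A tri-ladder is decomposable because \<open>C6bar\<close> splits into
two copies of \<open>K\<^sub>4\<close> along the three edges between its triangles, and splicing in a \<open>K\<^sub>4\<close> adds a
leaf.

Conversely, let \<open>G\<close> be cubic, 3-edge-connected (bricks are 3-connected), decomposable, and
bipartite after deleting two edges. Every decomposable graph with at least five vertices has two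
disjoint triangles (each shore of the root cut carries one), and contracting a triangle \<open>T\<close>
preserves all hypotheses. Every triangle contains a deleted edge, so \<open>G\<close> has no three disjoint
triangles; hence the contraction vertex of \<open>G/T\<close> lies in a triangle, and the other shore of
\<open>\<partial>(T)\<close> is \<open>K\<^sub>4\<close>, so \<open>G\<close> is \<open>G/T\<close> spliced with \<open>K\<^sub>4\<close> at a vertex in a triangle. Induction on the
number of vertices bottoms out at six vertices, where two disjoint triangles joined by three
edges form \<open>C6bar\<close>.\<close>

lemma rep_in: "X \<noteq> {} \<Longrightarrow> rep X \<in> X"
  unfolding rep_def by (auto intro: someI)

lemma wf_graph_edgeD:
  assumes "wf_graph G" "e \<in> gE G"
  shows "ends G e \<subseteq> gV G" "card (ends G e) = 2" "finite (ends G e)"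
    "\<exists>p q. p \<noteq> q \<and> ends G e = {p, q}"
proof -
  have a: "ends G e \<subseteq> gV G" "card (ends G e) = 2" using assms unfolding wf_graph_def by auto
  then show "ends G e \<subseteq> gV G" "card (ends G e) = 2" "finite (ends G e)" by (auto intro: card_ge_0_finite)
  show "\<exists>p q. p \<noteq> q \<and> ends G e = {p, q}" using a(2) unfolding card_2_iff by blast
qed

lemma wf_graph_finite: "wf_graph G \<Longrightarrow> finite (gV G)" "wf_graph G \<Longrightarrow> finite (gE G)"
  unfolding wf_graph_def by auto

lemma contract_simps[simp]:
  "gV (contract G X) = (gV G - X) \<union> {rep X}"
  "gE (contract G X) = {e \<in> gE G. \<not> ends G e \<subseteq> X}"
  "ends (contract G X) e = (\<lambda>w. if w \<in> X then rep X else w) ` ends G e"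
  unfolding contract_def by auto

lemma delete_edges_simps[simp]:
  "gV (delete_edges G F) = gV G" "gE (delete_edges G F) = gE G - F"
  "ends (delete_edges G F) = ends G"
  unfolding delete_edges_def by auto

lemma delete_verts_simps[simp]:
  "gV (delete_verts G S) = gV G - S" "gE (delete_verts G S) = {e \<in> gE G. ends G e \<inter> S = {}}"
  "ends (delete_verts G S) = ends G"
  unfolding delete_verts_def by auto

lemma adj_sym: "adj G u v \<longleftrightarrow> adj G v u"
  unfolding adj_def by (simp add: insert_commute)

lemma adj_irrefl: "wf_graph G \<Longrightarrow> \<not> adj G u u"
proof
  assume "wf_graph G" "adj G u u"
  then obtain e where "e \<in> gE G" "ends G e = {u}" unfolding adj_def by auto
  then show False using wf_graph_edgeD(2)[OF \<open>wf_graph G\<close>] by fastforce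
qed

lemma card_doubleton_Int_eq_1:
  assumes "x \<noteq> y"
  shows "card ({x, y} \<inter> A) = 1 \<longleftrightarrow> (x \<in> A \<longleftrightarrow> y \<notin> A)"
  using assms by (cases "x \<in> A"; cases "y \<in> A") (auto simp: Int_insert_left)

lemma card_ends_Int_eq_1_iff:
  assumes wf: "wf_graph G" and e: "e \<in> gE G"
  shows "(\<not> ends G e \<subseteq> X \<and> ends G e \<inter> X \<noteq> {}) \<longleftrightarrow> card (ends G e \<inter> X) = 1"
proof -
  obtain p q where pq: "p \<noteq> q" "ends G e = {p, q}" using wf_graph_edgeD(4)[OF wf e] by blast
  show ?thesis using card_doubleton_Int_eq_1[OF pq(1), of X] pq(2) by auto
qed

lemma card_ends_Int_superset:
  assumes "wf_graph G" "e \<in> gE G" "ends G e \<subseteq> T"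
  shows "card (ends G e \<inter> T) = 2"
proof -
  have "ends G e \<inter> T = ends G e" using assms(3) by blast
  then show ?thesis using wf_graph_edgeD(2)[OF assms(1,2)] by simp
qed

lemma cut_not_subset:
  assumes "wf_graph G" "e \<in> cut G T" shows "\<not> ends G e \<subseteq> T"
proof
  assume s: "ends G e \<subseteq> T"
  have "e \<in> gE G" "card (ends G e \<inter> T) = 1" using assms(2) unfolding cut_def by auto
  then show False using card_ends_Int_superset[OF assms(1) _ s] by simp
qed

lemma cut_edge_other_end:
  assumes wf: "wf_graph G" and r: "r \<in> cut G T" and x: "x \<in> T" "x \<in> ends G r"
  obtains y where "ends G r = {x, y}" "y \<in> gV G - T"
proof -
  have rE: "r \<in> gE G" using r unfolding cut_def by auto
  obtain p q where pq: "p \<noteq> q" "ends G r = {p, q}" using wf_graph_edgeD(4)[OF wf rE] by blast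
  have "card (ends G r \<inter> T) = 1" using r unfolding cut_def by auto
  then have pqT: "(p \<in> T \<longleftrightarrow> q \<notin> T)" using card_doubleton_Int_eq_1[OF pq(1)] pq(2) by simp
  have sV: "ends G r \<subseteq> gV G" using wf_graph_edgeD(1)[OF wf rE] .
  show ?thesis
  proof (cases "x = p")
    case True then show ?thesis using that pq pqT x sV by auto
  next
    case False then have "x = q" using x(2) pq(2) by auto
    then show ?thesis using that pq pqT x sV by (auto simp: insert_commute)
  qed
qed

definition incident :: "('v, 'e) mgraph \<Rightarrow> 'v \<Rightarrow> 'e set" where
  "incident G v = {e \<in> gE G. v \<in> ends G e}"

lemma card_incident: "cubic G \<Longrightarrow> v \<in> gV G \<Longrightarrow> card (incident G v) = 3"
  unfolding cubic_def degree_def incident_def by auto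

lemma finite_incident: assumes "wf_graph G" shows "finite (incident G v)"
  unfolding incident_def using wf_graph_finite(2)[OF assms] by auto

lemma card_incident_minus_two:
  assumes wf: "wf_graph G" and cub: "cubic G" and v: "v \<in> gV G"
    and e1: "e1 \<in> incident G v" and e2: "e2 \<in> incident G v" and ne: "e1 \<noteq> e2"
  shows "card (incident G v - {e1, e2}) = 1"
proof -
  have "card (incident G v - {e1, e2}) = card (incident G v) - card {e1, e2}"
    using card_Diff_subset[of "{e1,e2}" "incident G v"] e1 e2 by simp
  then show ?thesis using card_incident[OF cub v] ne by simp
qed

lemma sum_degree:
  assumes "wf_graph G"
  shows "(\<Sum>v\<in>gV G. degree G v) = 2 * card (gE G)"
proof -
  have fin: "finite (gV G)" "finite (gE G)"
    and en: "\<forall>e\<in>gE G. ends G e \<subseteq> gV G \<and> card (ends G e) = 2"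
    using assms unfolding wf_graph_def by auto
  have "(\<Sum>v\<in>gV G. degree G v) = (\<Sum>v\<in>gV G. \<Sum>e\<in>gE G. if v \<in> ends G e then 1 else 0)"
    unfolding degree_def using fin by (simp add: sum.If_cases Int_def)
  also have "\<dots> = (\<Sum>e\<in>gE G. \<Sum>v\<in>gV G. if v \<in> ends G e then 1 else 0)" by (rule sum.swap)
  also have "\<dots> = (\<Sum>e\<in>gE G. card (ends G e))"
  proof (rule sum.cong[OF refl])
    fix e assume "e \<in> gE G"
    then have "gV G \<inter> ends G e = ends G e" using en by auto
    then show "(\<Sum>v\<in>gV G. if v \<in> ends G e then 1 else 0) = card (ends G e)"
      using fin by (simp add: sum.If_cases)
  qed
  also have "\<dots> = 2 * card (gE G)" using en by simp
  finally show ?thesis .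
qed

lemma cubic_card_edges:
  assumes "wf_graph G" "cubic G"
  shows "2 * card (gE G) = 3 * card (gV G)"
proof -
  have "(\<Sum>v\<in>gV G. degree G v) = (\<Sum>v\<in>gV G. 3)" using assms(2) unfolding cubic_def by simp
  then show ?thesis using sum_degree[OF assms(1)] by simp
qed

definition isom :: "('v, 'e) mgraph \<Rightarrow> ('w, 'f) mgraph \<Rightarrow> ('v \<Rightarrow> 'w) \<Rightarrow> ('e \<Rightarrow> 'f) \<Rightarrow> bool" where
  "isom G H f g \<longleftrightarrow> bij_betw f (gV G) (gV H) \<and> bij_betw g (gE G) (gE H) \<and>
     (\<forall>e\<in>gE G. ends H (g e) = f ` ends G e)"

lemma iso_isom: "iso G H \<longleftrightarrow> (\<exists>f g. isom G H f g)"
  unfolding iso_def isom_def by auto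

lemma iso_at_isom: "iso_at G u H u' \<longleftrightarrow> (\<exists>f g. isom G H f g \<and> f u = u')"
  unfolding iso_at_def isom_def by auto

lemma bij_betw_preimage:
  "bij_betw g A B \<Longrightarrow> b \<in> B \<Longrightarrow> (\<And>a. a \<in> A \<Longrightarrow> b = g a \<Longrightarrow> P) \<Longrightarrow> P"
  unfolding bij_betw_def by auto

lemma isom_refl: "isom G G id id"
  unfolding isom_def by auto

lemma isom_trans: "isom G H f g \<Longrightarrow> isom H K f' g' \<Longrightarrow> isom G K (f' \<circ> f) (g' \<circ> g)"
  unfolding isom_def
  by (auto intro: bij_betw_trans simp: image_comp bij_betw_apply)

lemma iso_trans: "iso G H \<Longrightarrow> iso H K \<Longrightarrow> iso G K"
  using isom_trans iso_isom by metis

lemma isom_sym: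
  assumes "wf_graph G" "isom G H f g"
  shows "isom H G (inv_into (gV G) f) (inv_into (gE G) g)"
proof -
  have bf: "bij_betw f (gV G) (gV H)" and bg: "bij_betw g (gE G) (gE H)"
    and en: "\<forall>e\<in>gE G. ends H (g e) = f ` ends G e" using assms(2) unfolding isom_def by auto
  have "ends G (inv_into (gE G) g e') = inv_into (gV G) f ` ends H e'" if e'H: "e' \<in> gE H" for e'
  proof -
    obtain e where e: "e \<in> gE G" "e' = g e" using bij_betw_preimage[OF bg e'H] by blast
    have i: "inv_into (gE G) g e' = e" using e bg inv_into_f_f[of g "gE G" e] by (simp add: bij_betw_def)
    have "inv_into (gV G) f ` ends H e' = inv_into (gV G) f ` f ` ends G e" using en e by simp
    also have "\<dots> = ends G e"
      using inv_into_image_cancel[of f "gV G" "ends G e"] bf wf_graph_edgeD(1)[OF assms(1) e(1)]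
      by (simp add: bij_betw_def)
    finally show ?thesis using i by simp
  qed
  moreover have "bij_betw (inv_into (gV G) f) (gV H) (gV G)" using bf by (rule bij_betw_inv_into)
  moreover have "bij_betw (inv_into (gE G) g) (gE H) (gE G)" using bg by (rule bij_betw_inv_into)
  ultimately show ?thesis unfolding isom_def by simp
qed

lemma iso_sym: "wf_graph G \<Longrightarrow> iso G H \<Longrightarrow> iso H G"
  using isom_sym iso_isom by metis

lemma isom_wf:
  assumes "wf_graph G" "isom G H f g"
  shows "wf_graph H"
proof -
  have bf: "bij_betw f (gV G) (gV H)" and bg: "bij_betw g (gE G) (gE H)"
    and en: "\<forall>e\<in>gE G. ends H (g e) = f ` ends G e" using assms(2) unfolding isom_def by auto
  have f1: "finite (gV H)" using bf wf_graph_finite[OF assms(1)] bij_betw_finite by blast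
  have f2: "finite (gE H)" using bg wf_graph_finite[OF assms(1)] bij_betw_finite by blast
  have "\<forall>e'\<in>gE H. ends H e' \<subseteq> gV H \<and> card (ends H e') = 2"
  proof
    fix e' assume "e' \<in> gE H"
    then have "e' \<in> gE H" by auto
    then obtain e where e: "e \<in> gE G" "e' = g e" using bij_betw_preimage[OF bg] by metis
    have s: "ends G e \<subseteq> gV G" "card (ends G e) = 2" using wf_graph_edgeD[OF assms(1) e(1)] by auto
    have "inj_on f (ends G e)" using bf s(1) by (auto simp: bij_betw_def intro: inj_on_subset)
    moreover have "f ` ends G e \<subseteq> gV H" using s(1) bf by (auto simp: bij_betw_def)
    ultimately show "ends H e' \<subseteq> gV H \<and> card (ends H e') = 2"
      using en e s by (auto simp: card_image)
  qed
  then show ?thesis unfolding wf_graph_def using f1 f2 by simp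
qed

lemma isom_card: "isom G H f g \<Longrightarrow> card (gV G) = card (gV H)"
  unfolding isom_def using bij_betw_same_card by blast

lemma isom_adj:
  assumes "wf_graph G" "isom G H f g" "u \<in> gV G" "v \<in> gV G"
  shows "adj H (f u) (f v) \<longleftrightarrow> adj G u v"
proof -
  have bf: "bij_betw f (gV G) (gV H)" and bg: "bij_betw g (gE G) (gE H)"
    and en: "\<forall>e\<in>gE G. ends H (g e) = f ` ends G e" using assms(2) unfolding isom_def by auto
  have inj: "inj_on f (gV G)" using bf by (simp add: bij_betw_def)
  show ?thesis
  proof
    assume "adj H (f u) (f v)"
    then obtain e' where e': "e' \<in> gE H" "ends H e' = {f u, f v}" unfolding adj_def by auto
    obtain e where e: "e \<in> gE G" "e' = g e" using bij_betw_preimage[OF bg e'(1)] by blast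
    have s: "ends G e \<subseteq> gV G" using wf_graph_edgeD[OF assms(1) e(1)] by auto
    have "f ` ends G e = f ` {u, v}" using en e e' by auto
    then have "ends G e = {u, v}" using inj_on_image_eq_iff[OF inj s, of "{u,v}"] assms(3,4) by auto
    then show "adj G u v" unfolding adj_def using e by auto
  next
    assume "adj G u v"
    then obtain e where "e \<in> gE G" "ends G e = {u, v}" unfolding adj_def by auto
    then show "adj H (f u) (f v)" unfolding adj_def using en bg
      by (intro bexI[of _ "g e"]) (auto simp: bij_betw_def)
  qed
qed

lemma isom_degree:
  assumes "wf_graph G" "isom G H f g" "v \<in> gV G"
  shows "degree H (f v) = degree G v"
proof -
  have bf: "bij_betw f (gV G) (gV H)" and bg: "bij_betw g (gE G) (gE H)"
    and en: "\<forall>e\<in>gE G. ends H (g e) = f ` ends G e" using assms(2) unfolding isom_def by auto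
  have inj: "inj_on f (gV G)" using bf by (simp add: bij_betw_def)
  have img: "g ` {e \<in> gE G. v \<in> ends G e} = {e' \<in> gE H. f v \<in> ends H e'}"
  proof (intro equalityI subsetI)
    fix e' assume "e' \<in> g ` {e \<in> gE G. v \<in> ends G e}"
    then show "e' \<in> {e' \<in> gE H. f v \<in> ends H e'}" using en bg by (auto simp: bij_betw_def)
  next
    fix e' assume a: "e' \<in> {e' \<in> gE H. f v \<in> ends H e'}"
    then have "e' \<in> gE H" by auto
    then obtain e where e: "e \<in> gE G" "e' = g e" using bij_betw_preimage[OF bg] by metis
    have s: "ends G e \<subseteq> gV G" using wf_graph_edgeD[OF assms(1) e(1)] by auto
    have "f v \<in> f ` ends G e" using a en e by auto
    then have "v \<in> ends G e" using inj s assms(3) by (auto dest: inj_onD)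
    then show "e' \<in> g ` {e \<in> gE G. v \<in> ends G e}" using e by auto
  qed
  have "inj_on g {e \<in> gE G. v \<in> ends G e}" using bg by (auto simp: bij_betw_def intro: inj_on_subset)
  then show ?thesis unfolding degree_def using img card_image by metis
qed

lemma isom_cut:
  assumes "wf_graph G" "isom G H f g" "X \<subseteq> gV G"
  shows "g ` cut G X = cut H (f ` X)" "card (cut H (f ` X)) = card (cut G X)"
proof -
  have bf: "bij_betw f (gV G) (gV H)" and bg: "bij_betw g (gE G) (gE H)"
    and en: "\<forall>e\<in>gE G. ends H (g e) = f ` ends G e" using assms(2) unfolding isom_def by auto
  have inj: "inj_on f (gV G)" using bf by (simp add: bij_betw_def)
  have key: "card (ends H (g e) \<inter> f ` X) = card (ends G e \<inter> X)" if "e \<in> gE G" for e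
  proof -
    have s: "ends G e \<subseteq> gV G" using wf_graph_edgeD[OF assms(1) that] by auto
    have "ends H (g e) \<inter> f ` X = f ` (ends G e \<inter> X)"
      using en that inj_on_image_Int[OF inj s assms(3)] by simp
    moreover have "inj_on f (ends G e \<inter> X)" using inj s by (auto intro: inj_on_subset)
    ultimately show ?thesis by (simp add: card_image)
  qed
  show img: "g ` cut G X = cut H (f ` X)"
  proof (intro equalityI subsetI)
    fix e' assume "e' \<in> g ` cut G X"
    then show "e' \<in> cut H (f ` X)" using key bg unfolding cut_def by (auto simp: bij_betw_def)
  next
    fix e' assume a: "e' \<in> cut H (f ` X)"
    then have "e' \<in> gE H" unfolding cut_def by auto
    then obtain e where e: "e \<in> gE G" "e' = g e" using bij_betw_preimage[OF bg] by metis
    then show "e' \<in> g ` cut G X" using a key unfolding cut_def by auto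
  qed
  have "inj_on g (cut G X)" using bg unfolding cut_def by (auto simp: bij_betw_def intro: inj_on_subset)
  then show "card (cut H (f ` X)) = card (cut G X)" using img card_image by metis
qed

definition simple :: "('v, 'e) mgraph \<Rightarrow> bool" where
  "simple H \<longleftrightarrow> (\<forall>e1\<in>gE H. \<forall>e2\<in>gE H. ends H e1 = ends H e2 \<longrightarrow> e1 = e2)"

lemma isom_of_adj_bij:
  assumes wfG: "wf_graph G" and wfH: "wf_graph H" and bf: "bij_betw f (gV G) (gV H)"
    and ad: "\<forall>u\<in>gV G. \<forall>v\<in>gV G. adj H (f u) (f v) \<longleftrightarrow> adj G u v"
    and sH: "simple H" and cE: "card (gE G) = card (gE H)"
  shows "\<exists>g. isom G H f g"
proof -
  define g where "g = (\<lambda>e. THE e'. e' \<in> gE H \<and> ends H e' = f ` ends G e)"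
  have gp: "g e \<in> gE H \<and> ends H (g e) = f ` ends G e" if e: "e \<in> gE G" for e
  proof -
    obtain u v where uv: "u \<noteq> v" "ends G e = {u, v}" using wf_graph_edgeD(4)[OF wfG e] by blast
    have uvV: "u \<in> gV G" "v \<in> gV G" using wf_graph_edgeD(1)[OF wfG e] uv(2) by auto
    have "adj G u v" unfolding adj_def using e uv(2) by blast
    then have "adj H (f u) (f v)" using ad uvV by blast
    then obtain e' where e': "e' \<in> gE H" "ends H e' = {f u, f v}" unfolding adj_def by blast
    have ex: "\<exists>!e'. e' \<in> gE H \<and> ends H e' = f ` ends G e"
    proof
      show "e' \<in> gE H \<and> ends H e' = f ` ends G e" using e' uv(2) by simp
      fix e2 assume "e2 \<in> gE H \<and> ends H e2 = f ` ends G e"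
      then show "e2 = e'" using sH e' uv(2) unfolding simple_def by auto
    qed
    show ?thesis unfolding g_def using theI'[OF ex] .
  qed
  have inj: "inj_on f (gV G)" and fV: "f ` gV G = gV H" using bf by (auto simp: bij_betw_def)
  have surj: "g ` gE G = gE H"
  proof (intro equalityI subsetI)
    fix x assume "x \<in> g ` gE G" then show "x \<in> gE H" using gp by auto
  next
    fix e' assume e': "e' \<in> gE H"
    obtain p q where pq: "p \<noteq> q" "ends H e' = {p, q}" using wf_graph_edgeD(4)[OF wfH e'] by blast
    have pqV: "p \<in> gV H" "q \<in> gV H" using wf_graph_edgeD(1)[OF wfH e'] pq(2) by auto
    obtain u where u: "u \<in> gV G" "p = f u" using pqV(1) fV by auto
    obtain v where v: "v \<in> gV G" "q = f v" using pqV(2) fV by auto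
    have "adj H (f u) (f v)" unfolding adj_def using e' pq u v by blast
    then have "adj G u v" using ad u v by blast
    then obtain e where e: "e \<in> gE G" "ends G e = {u, v}" unfolding adj_def by blast
    have "g e = e'" using gp[OF e(1)] e(2) e' pq u v sH unfolding simple_def by auto
    then show "e' \<in> g ` gE G" using e(1) by blast
  qed
  have "inj_on g (gE G)"
    using eq_card_imp_inj_on[OF wf_graph_finite(2)[OF wfG], of g] surj cE by simp
  then have "bij_betw g (gE G) (gE H)" using surj by (simp add: bij_betw_def)
  then have "isom G H f g" unfolding isom_def using bf gp by blast
  then show ?thesis by blast
qed

section \<open>Contraction\<close>

abbreviation contract_vertex :: "'v set \<Rightarrow> 'v \<Rightarrow> 'v" where
  "contract_vertex X w \<equiv> (if w \<in> X then rep X else w)"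

lemma contract_vertex_image_notin:
  assumes "X \<noteq> {}" "w \<notin> X"
  shows "w \<in> contract_vertex X ` A \<longleftrightarrow> w \<in> A"
proof -
  have r: "rep X \<in> X" using rep_in[OF assms(1)] .
  show ?thesis
  proof
    assume "w \<in> contract_vertex X ` A"
    then obtain u where u: "u \<in> A" "w = contract_vertex X u" by blast
    have "u \<notin> X" using u(2) r assms(2) by (cases "u \<in> X") auto
    then show "w \<in> A" using u by simp
  next
    assume "w \<in> A" then show "w \<in> contract_vertex X ` A" using assms(2) by (intro image_eqI[of _ _ w]) auto
  qed
qed

lemma rep_in_contract_vertex_image:
  assumes "X \<noteq> {}"
  shows "rep X \<in> contract_vertex X ` A \<longleftrightarrow> A \<inter> X \<noteq> {}"
proof -
  have r: "rep X \<in> X" using rep_in[OF assms(1)] .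
  show ?thesis
  proof
    assume "rep X \<in> contract_vertex X ` A"
    then obtain u where u: "u \<in> A" "rep X = contract_vertex X u" by blast
    then have "u \<in> X" using r by (cases "u \<in> X") auto
    then show "A \<inter> X \<noteq> {}" using u by blast
  next
    assume "A \<inter> X \<noteq> {}"
    then obtain u where "u \<in> A" "u \<in> X" by blast
    then show "rep X \<in> contract_vertex X ` A" by (intro image_eqI[of _ _ u]) auto
  qed
qed

lemma adj_contract:
  assumes "adj G u v" "u \<notin> X" "v \<notin> X"
  shows "adj (contract G X) u v"
proof -
  obtain e where e: "e \<in> gE G" "ends G e = {u, v}" using assms(1) unfolding adj_def by blast
  have "\<not> ends G e \<subseteq> X" using e(2) assms(2) by auto
  moreover have "contract_vertex X ` ends G e = {u, v}" using e(2) assms(2,3) by simp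
  ultimately show ?thesis unfolding adj_def using e(1) by auto
qed

lemma adj_contract_lift:
  assumes "adj (contract G X) u v" "u \<notin> X" "v \<notin> X" "X \<noteq> {}"
  shows "adj G u v"
proof -
  have r: "rep X \<in> X" using rep_in[OF assms(4)] .
  obtain e where e: "e \<in> gE G" "contract_vertex X ` ends G e = {u, v}" using assms(1) unfolding adj_def by auto
  have d: "ends G e \<inter> X = {}"
  proof (rule ccontr)
    assume "ends G e \<inter> X \<noteq> {}"
    then have "rep X \<in> contract_vertex X ` ends G e" using rep_in_contract_vertex_image[OF assms(4)] by blast
    then show False using e(2) r assms(2,3) by auto
  qed
  have "contract_vertex X ` ends G e = id ` ends G e" using d by (intro image_cong) auto
  then have "contract_vertex X ` ends G e = ends G e" by simp
  then show ?thesis unfolding adj_def using e by auto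
qed

lemma wf_contract:
  assumes wf: "wf_graph G" and X: "X \<subseteq> gV G" "X \<noteq> {}"
  shows "wf_graph (contract G X)"
proof -
  have r: "rep X \<in> X" using rep_in[OF X(2)] .
  have "ends (contract G X) e \<subseteq> gV (contract G X) \<and> card (ends (contract G X) e) = 2"
    if e: "e \<in> gE (contract G X)" for e
  proof -
    have eE: "e \<in> gE G" and nx: "\<not> ends G e \<subseteq> X" using e by auto
    obtain p q where pq: "p \<noteq> q" "ends G e = {p, q}" using wf_graph_edgeD(4)[OF wf eE] by blast
    have "ends (contract G X) e = {contract_vertex X p, contract_vertex X q}"
      using pq(2) by (simp only: contract_simps image_insert image_empty)
    moreover have "contract_vertex X p \<noteq> contract_vertex X q" using nx pq r by auto
    moreover have "ends G e \<subseteq> gV G" using wf_graph_edgeD(1)[OF wf eE] .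
    ultimately show ?thesis using pq(2) r by auto
  qed
  then show ?thesis unfolding wf_graph_def using wf_graph_finite[OF wf] by simp
qed

lemma bij_betw_contract_vertex_map:
  assumes inj: "inj_on f V" and X: "X \<subseteq> V" "X \<noteq> {}"
  shows "bij_betw (\<lambda>w. if w \<in> X then rep (f ` X) else f w)
           ((V - X) \<union> {rep X}) ((f ` V - f ` X) \<union> {rep (f ` X)})"
proof -
  let ?F = "\<lambda>w. if w \<in> X then rep (f ` X) else f w"
  have "bij_betw f (V - X) (f ` V - f ` X)"
    unfolding bij_betw_def using inj_on_subset[OF inj] inj_on_image_set_diff[OF inj _ X(1)] by blast
  then have 1: "bij_betw ?F (V - X) (f ` V - f ` X)" by (rule bij_betw_cong[THEN iffD1, rotated]) auto
  have 2: "bij_betw ?F {rep X} {rep (f ` X)}" using rep_in[OF X(2)] by auto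
  have "rep (f ` X) \<in> f ` X" by (rule rep_in) (use X(2) in simp)
  then have "(f ` V - f ` X) \<inter> {rep (f ` X)} = {}" by auto
  then show ?thesis using bij_betw_combine[OF 1 2] by simp
qed

lemma isom_contract:
  assumes wf: "wf_graph G" and im: "isom G H f g" and X: "X \<subseteq> gV G" "X \<noteq> {}"
  shows "isom (contract G X) (contract H (f ` X)) (\<lambda>w. if w \<in> X then rep (f ` X) else f w) g"
proof -
  define F where "F = (\<lambda>w. if w \<in> X then rep (f ` X) else f w)"
  have bf: "bij_betw f (gV G) (gV H)" and bg: "bij_betw g (gE G) (gE H)"
    and en: "\<forall>e\<in>gE G. ends H (g e) = f ` ends G e" using im unfolding isom_def by auto
  have inj: "inj_on f (gV G)" and fV: "f ` gV G = gV H" using bf by (auto simp: bij_betw_def)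
  have rX: "rep X \<in> X" using rep_in[OF X(2)] .
  have memX: "f w \<in> f ` X \<longleftrightarrow> w \<in> X" if "w \<in> gV G" for w
    using inj_on_image_mem_iff[OF inj that X(1)] .
  have bF: "bij_betw F (gV (contract G X)) (gV (contract H (f ` X)))"
    using bij_betw_contract_vertex_map[OF inj X] fV unfolding F_def by simp
  have sub_iff: "f ` ends G e \<subseteq> f ` X \<longleftrightarrow> ends G e \<subseteq> X" if "e \<in> gE G" for e
    using wf_graph_edgeD(1)[OF wf that] memX by blast
  have bg2: "bij_betw g {e \<in> gE G. \<not> ends G e \<subseteq> X} {e' \<in> gE H. \<not> ends H e' \<subseteq> f ` X}"
    unfolding bij_betw_def
  proof
    show "inj_on g {e \<in> gE G. \<not> ends G e \<subseteq> X}" using bg by (auto simp: bij_betw_def intro: inj_on_subset)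
    show "g ` {e \<in> gE G. \<not> ends G e \<subseteq> X} = {e' \<in> gE H. \<not> ends H e' \<subseteq> f ` X}"
    proof (intro equalityI subsetI)
      fix e' assume "e' \<in> g ` {e \<in> gE G. \<not> ends G e \<subseteq> X}"
      then obtain e where e: "e \<in> gE G" "\<not> ends G e \<subseteq> X" "e' = g e" by auto
      then show "e' \<in> {e' \<in> gE H. \<not> ends H e' \<subseteq> f ` X}"
        using sub_iff en bg by (auto simp: bij_betw_def)
    next
      fix e' assume a: "e' \<in> {e' \<in> gE H. \<not> ends H e' \<subseteq> f ` X}"
      then have "e' \<in> gE H" by auto
      then obtain e where e: "e \<in> gE G" "e' = g e" using bij_betw_preimage[OF bg] by metis
      then show "e' \<in> g ` {e \<in> gE G. \<not> ends G e \<subseteq> X}" using a sub_iff en by auto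
    qed
  qed
  have ends2: "ends (contract H (f ` X)) (g e) = F ` ends (contract G X) e" if "e \<in> gE G" for e
  proof -
    have "ends H (g e) = f ` ends G e" using en that by blast
    then have "ends (contract H (f ` X)) (g e) = (\<lambda>w. contract_vertex (f ` X) (f w)) ` ends G e"
      by (simp only: contract_simps image_image)
    also have "\<dots> = (\<lambda>w. F (contract_vertex X w)) ` ends G e"
      using memX rX wf_graph_edgeD(1)[OF wf that] by (intro image_cong) (auto simp: F_def)
    also have "\<dots> = F ` ends (contract G X) e" by (simp only: contract_simps image_image)
    finally show ?thesis .
  qed
  show ?thesis unfolding isom_def F_def[symmetric] using bF bg2 ends2 by simp
qed

lemma iso_contract:
  assumes "wf_graph G" "isom G H f g" "X \<subseteq> gV G" "X \<noteq> {}"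
  shows "iso (contract G X) (contract H (f ` X))"
  using isom_contract[OF assms] iso_isom by blast

lemma cut_compl:
  assumes wf: "wf_graph G" and X: "X \<subseteq> gV G"
  shows "cut G (gV G - X) = cut G X"
proof (rule set_eqI)
  fix e
  show "e \<in> cut G (gV G - X) \<longleftrightarrow> e \<in> cut G X"
  proof (cases "e \<in> gE G")
    case True
    have s: "ends G e \<subseteq> gV G" "card (ends G e) = 2" "finite (ends G e)" using wf_graph_edgeD[OF wf True] by auto
    have "ends G e \<inter> (gV G - X) = ends G e - (ends G e \<inter> X)" using s by auto
    then have "card (ends G e \<inter> (gV G - X)) = 2 - card (ends G e \<inter> X)"
      using s card_Diff_subset[of "ends G e \<inter> X" "ends G e"] by (simp add: finite_subset)
    moreover have "card (ends G e \<inter> X) \<le> 2" using s card_mono[of "ends G e" "ends G e \<inter> X"] by simp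
    ultimately show ?thesis unfolding cut_def using True by auto
  next
    case False then show ?thesis unfolding cut_def by auto
  qed
qed

lemma nontrivial_3cutD:
  assumes "nontrivial_3cut G X"
  shows "X \<subseteq> gV G" "X \<noteq> {}" "gV G - X \<noteq> {}" "card X \<ge> 2" "card (gV G - X) \<ge> 2" "card (cut G X) = 3"
  using assms unfolding nontrivial_3cut_def by (auto intro!: notI)

lemma nontrivial_3cut_compl:
  assumes wf: "wf_graph G" and nt: "nontrivial_3cut G X"
  shows "nontrivial_3cut G (gV G - X)"
proof -
  have X: "X \<subseteq> gV G" using nt unfolding nontrivial_3cut_def by auto
  have d: "gV G - (gV G - X) = X" using X by auto
  show ?thesis using nt cut_compl[OF wf X] d unfolding nontrivial_3cut_def by auto
qed

lemma card_contract:
  assumes "finite (gV G)" "X \<subseteq> gV G" "X \<noteq> {}"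
  shows "card (gV (contract G X)) = card (gV G - X) + 1"
proof -
  have "rep X \<notin> gV G - X" using rep_in[OF assms(3)] by auto
  then show ?thesis using assms(1) by simp
qed

lemma card_contract_nontrivial_3cut:
  assumes wf: "wf_graph G" and nt: "nontrivial_3cut G X"
  shows "card (gV (contract G X)) < card (gV G)" "card (gV (contract G (gV G - X))) < card (gV G)"
    "card (gV (contract G X)) + card (gV (contract G (gV G - X))) = card (gV G) + 2"
proof -
  note X = nontrivial_3cutD[OF nt]
  have fin: "finite (gV G)" using wf_graph_finite(1)[OF wf] .
  have c1: "card (gV (contract G X)) = card (gV G - X) + 1" using card_contract[OF fin X(1,2)] .
  have c2: "card (gV (contract G (gV G - X))) = card X + 1"
    using card_contract[OF fin Diff_subset X(3)] X(1) by (simp add: double_diff)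
  have cs: "card (gV G) = card X + card (gV G - X)"
    using card_Diff_subset[OF finite_subset[OF X(1) fin] X(1)] card_mono[OF fin X(1)] by simp
  show "card (gV (contract G X)) < card (gV G)" using c1 cs X(4) by simp
  show "card (gV (contract G (gV G - X))) < card (gV G)" using c2 cs X(5) by simp
  show "card (gV (contract G X)) + card (gV (contract G (gV G - X))) = card (gV G) + 2"
    using c1 c2 cs by simp
qed

lemma wf_graph_contract_nontrivial_3cut:
  assumes wf: "wf_graph G" and nt: "nontrivial_3cut G X"
  shows "wf_graph (contract G X)" "wf_graph (contract G (gV G - X))"
  using wf_contract[OF wf nontrivial_3cutD(1,2)[OF nt]]
    wf_contract[OF wf Diff_subset nontrivial_3cutD(3)[OF nt]] by auto

lemma degree_contract_rep:
  assumes wf: "wf_graph G" and Y: "Y \<noteq> {}"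
  shows "degree (contract G Y) (rep Y) = card (cut G Y)"
proof -
  have "{e \<in> gE (contract G Y). rep Y \<in> ends (contract G Y) e} = cut G Y"
  proof (intro set_eqI iffI)
    fix e assume "e \<in> {e \<in> gE (contract G Y). rep Y \<in> ends (contract G Y) e}"
    then have e: "e \<in> gE G" "\<not> ends G e \<subseteq> Y" "rep Y \<in> contract_vertex Y ` ends G e" by auto
    then have "ends G e \<inter> Y \<noteq> {}" using rep_in_contract_vertex_image[OF Y] by blast
    then show "e \<in> cut G Y" unfolding cut_def using card_ends_Int_eq_1_iff[OF wf e(1)] e by blast
  next
    fix e assume "e \<in> cut G Y"
    then have e: "e \<in> gE G" "card (ends G e \<inter> Y) = 1" unfolding cut_def by auto
    then have "\<not> ends G e \<subseteq> Y" "ends G e \<inter> Y \<noteq> {}" using card_ends_Int_eq_1_iff[OF wf e(1)] by blast+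
    then show "e \<in> {e \<in> gE (contract G Y). rep Y \<in> ends (contract G Y) e}"
      using e rep_in_contract_vertex_image[OF Y] by auto
  qed
  then show ?thesis unfolding degree_def by simp
qed

lemma cubic_contract:
  assumes wf: "wf_graph G" and cub: "cubic G" and nt: "nontrivial_3cut G X"
  shows "cubic (contract G X)"
  unfolding cubic_def
proof
  have Xne: "X \<noteq> {}" using nontrivial_3cutD(2)[OF nt] .
  fix w assume w: "w \<in> gV (contract G X)"
  show "degree (contract G X) w = 3"
  proof (cases "w \<in> X")
    case True
    then have "w = rep X" using w by auto
    then show ?thesis using degree_contract_rep[OF wf Xne] nontrivial_3cutD(6)[OF nt] by simp
  next
    case False
    then have wV: "w \<in> gV G" using w rep_in[OF Xne] by auto
    have "{e \<in> gE (contract G X). w \<in> ends (contract G X) e} = {e \<in> gE G. w \<in> ends G e}"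
    proof (intro set_eqI iffI)
      fix e assume "e \<in> {e \<in> gE (contract G X). w \<in> ends (contract G X) e}"
      then show "e \<in> {e \<in> gE G. w \<in> ends G e}" using contract_vertex_image_notin[OF Xne False] by auto
    next
      fix e assume e: "e \<in> {e \<in> gE G. w \<in> ends G e}"
      then have "\<not> ends G e \<subseteq> X" using False by auto
      then show "e \<in> {e \<in> gE (contract G X). w \<in> ends (contract G X) e}"
        using e contract_vertex_image_notin[OF Xne False] by auto
    qed
    then show ?thesis unfolding degree_def using cub wV unfolding cubic_def degree_def by simp
  qed
qed

definition three_edge_connected :: "('v, 'e) mgraph \<Rightarrow> bool" where
  "three_edge_connected G \<longleftrightarrow>
     (\<forall>Y. Y \<subseteq> gV G \<longrightarrow> Y \<noteq> {} \<longrightarrow> gV G - Y \<noteq> {} \<longrightarrow> card (cut G Y) \<ge> 3)"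

lemma three_edge_connectedD:
  "three_edge_connected G \<Longrightarrow> Y \<subseteq> gV G \<Longrightarrow> Y \<noteq> {} \<Longrightarrow> gV G - Y \<noteq> {} \<Longrightarrow> card (cut G Y) \<ge> 3"
  unfolding three_edge_connected_def by blast

lemma cut_contract:
  assumes wf: "wf_graph G" and X: "X \<noteq> {}" and Y: "Y \<subseteq> gV (contract G X)"
  shows "cut (contract G X) Y = cut G ((Y - {rep X}) \<union> (if rep X \<in> Y then X else {}))"
proof -
  define Y' where "Y' = (Y - {rep X}) \<union> (if rep X \<in> Y then X else {})"
  have r: "rep X \<in> X" using rep_in[OF X] .
  have mem: "contract_vertex X w \<in> Y \<longleftrightarrow> w \<in> Y'" if "w \<in> gV G" for w
  proof (cases "w \<in> X")
    case True
    have "w \<in> Y \<Longrightarrow> w = rep X" using Y True by auto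
    then show ?thesis unfolding Y'_def using r True by auto
  next
    case False then show ?thesis unfolding Y'_def using r Y that by auto
  qed
  have "cut (contract G X) Y = cut G Y'"
proof (intro set_eqI)
  fix e
  show "e \<in> cut (contract G X) Y \<longleftrightarrow> e \<in> cut G Y'"
  proof (cases "e \<in> gE G")
    case False then show ?thesis unfolding cut_def by auto
  next
    case eE: True
    obtain p q where pq: "p \<noteq> q" "ends G e = {p, q}" using wf_graph_edgeD(4)[OF wf eE] by blast
    have pqV: "p \<in> gV G" "q \<in> gV G" using wf_graph_edgeD(1)[OF wf eE] pq(2) by auto
    have cG: "card (ends G e \<inter> Y') = 1 \<longleftrightarrow> (p \<in> Y' \<longleftrightarrow> q \<notin> Y')" using card_doubleton_Int_eq_1[OF pq(1)] pq(2) by simp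
    show ?thesis
    proof (cases "ends G e \<subseteq> X")
      case True
      then have "p \<in> X" "q \<in> X" using pq by auto
      then have "(p \<in> Y' \<longleftrightarrow> q \<in> Y')" using mem[OF pqV(1)] mem[OF pqV(2)] by auto
      then show ?thesis unfolding cut_def using True cG by auto
    next
      case False
      have img: "ends (contract G X) e = {contract_vertex X p, contract_vertex X q}" using pq(2) by simp
      have ne: "contract_vertex X p \<noteq> contract_vertex X q" using False pq r by (auto split: if_splits)
      have "card (ends (contract G X) e \<inter> Y) = 1 \<longleftrightarrow> (contract_vertex X p \<in> Y \<longleftrightarrow> contract_vertex X q \<notin> Y)"
        using card_doubleton_Int_eq_1[OF ne] img by simp
      then show ?thesis unfolding cut_def using False eE cG mem[OF pqV(1)] mem[OF pqV(2)] by auto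
    qed
  qed
qed
  then show ?thesis unfolding Y'_def .
qed

lemma three_edge_connected_contract:
  assumes wf: "wf_graph G" and ec: "three_edge_connected G" and X: "X \<subseteq> gV G" "X \<noteq> {}"
  shows "three_edge_connected (contract G X)"
  unfolding three_edge_connected_def
proof (intro allI impI)
  have r: "rep X \<in> X" using rep_in[OF X(2)] .
  fix Y assume Y: "Y \<subseteq> gV (contract G X)" "Y \<noteq> {}" "gV (contract G X) - Y \<noteq> {}"
  define Y' where "Y' = (Y - {rep X}) \<union> (if rep X \<in> Y then X else {})"
  have cuteq: "cut (contract G X) Y = cut G Y'" unfolding Y'_def using cut_contract[OF wf X(2) Y(1)] .
  have Y'V: "Y' \<subseteq> gV G" unfolding Y'_def using Y(1) X(1) by auto
  have Y'ne: "Y' \<noteq> {}"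
  proof -
    obtain y where y: "y \<in> Y" using Y(2) by blast
    show ?thesis
    proof (cases "y = rep X")
      case True then show ?thesis unfolding Y'_def using y X(2) by auto
    next
      case False then show ?thesis unfolding Y'_def using y by auto
    qed
  qed
  have Y'c: "gV G - Y' \<noteq> {}"
  proof -
    obtain z where z: "z \<in> gV (contract G X)" "z \<notin> Y" using Y(3) by blast
    show ?thesis
    proof (cases "z = rep X")
      case True
      then have "rep X \<notin> Y'" unfolding Y'_def using z(2) r by auto
      then show ?thesis using r X(1) by auto
    next
      case False
      then have "z \<in> gV G" "z \<notin> Y'" unfolding Y'_def using z by auto
      then show ?thesis by auto
    qed
  qed
  show "card (cut (contract G X) Y) \<ge> 3" using three_edge_connectedD[OF ec Y'V Y'ne Y'c] cuteq by simp
qed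

lemma contract_comm:
  assumes "X \<inter> T = {}" "X \<noteq> {}" "T \<noteq> {}"
  shows "contract (contract G X) T = contract (contract G T) X"
proof -
  have rX: "rep X \<in> X" using rep_in[OF assms(2)] .
  have rT: "rep T \<in> T" using rep_in[OF assms(3)] .
  have rXT: "rep X \<notin> T" "rep T \<notin> X" using rX rT assms(1) by auto
  have V: "gV (contract (contract G X) T) = gV (contract (contract G T) X)"
    using rXT rX rT assms(1) by auto
  have sub1: "contract_vertex X ` A \<subseteq> T \<longleftrightarrow> A \<subseteq> T" for A using rXT assms(1) by auto
  have sub2: "contract_vertex T ` A \<subseteq> X \<longleftrightarrow> A \<subseteq> X" for A using rXT assms(1) by auto
  have E: "gE (contract (contract G X) T) = gE (contract (contract G T) X)"
    using sub1 sub2 by auto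
  have cc: "contract_vertex T (contract_vertex X w) = contract_vertex X (contract_vertex T w)" for w using rXT assms(1) by auto
  have en: "ends (contract (contract G X) T) = ends (contract (contract G T) X)"
  proof
    fix e
    have "ends (contract (contract G X) T) e = (\<lambda>w. contract_vertex T (contract_vertex X w)) ` ends G e"
      by (simp only: contract_simps image_image)
    also have "\<dots> = (\<lambda>w. contract_vertex X (contract_vertex T w)) ` ends G e" using cc by simp
    also have "\<dots> = ends (contract (contract G T) X) e" by (simp only: contract_simps image_image)
    finally show "ends (contract (contract G X) T) e = ends (contract (contract G T) X) e" .
  qed
  show ?thesis using V E en by (simp add: mgraph.equality)
qed

lemma cut_contract_disjoint:
  assumes "T \<inter> Z = {}" "T \<noteq> {}"
  shows "cut (contract G T) Z = cut G Z"
proof -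
  have rT: "rep T \<in> T" using rep_in[OF assms(2)] .
  have ii: "contract_vertex T ` A \<inter> Z = A \<inter> Z" for A
  proof
    show "contract_vertex T ` A \<inter> Z \<subseteq> A \<inter> Z"
    proof
      fix x assume "x \<in> contract_vertex T ` A \<inter> Z"
      then obtain u where u: "u \<in> A" "x = contract_vertex T u" "x \<in> Z" by blast
      then have "u \<notin> T" using rT assms(1) by (cases "u \<in> T") auto
      then show "x \<in> A \<inter> Z" using u by simp
    qed
    show "A \<inter> Z \<subseteq> contract_vertex T ` A \<inter> Z"
    proof
      fix x assume x: "x \<in> A \<inter> Z"
      then have "x \<notin> T" using assms(1) by auto
      then show "x \<in> contract_vertex T ` A \<inter> Z" using x by (intro IntI image_eqI[of _ _ x]) auto
    qed
  qed
  show ?thesis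
  proof (intro set_eqI iffI)
    fix e assume "e \<in> cut (contract G T) Z"
    then show "e \<in> cut G Z" unfolding cut_def using ii by auto
  next
    fix e assume e: "e \<in> cut G Z"
    then have c: "card (ends G e \<inter> Z) = 1" unfolding cut_def by auto
    have "\<not> ends G e \<subseteq> T"
    proof
      assume "ends G e \<subseteq> T"
      then have "ends G e \<inter> Z = {}" using assms(1) by auto
      then show False using c by simp
    qed
    then show "e \<in> cut (contract G T) Z" using e ii unfolding cut_def by auto
  qed
qed

lemma contract_in_stages:
  assumes T: "T \<subseteq> Y" "T \<noteq> {}"
  shows "iso (contract (contract G T) ((Y - T) \<union> {rep T})) (contract G Y)"
proof -
  let ?Y' = "(Y - T) \<union> {rep T}"
  define f where "f = (\<lambda>v. if v = rep ?Y' then rep Y else v)"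
  have rT: "rep T \<in> T" using rep_in[OF T(2)] .
  have rY: "rep Y \<in> Y" using rep_in T(1,2) by (metis subset_empty)
  have "rep ?Y' \<in> ?Y'" by (rule rep_in) simp
  then have rY': "rep ?Y' \<in> Y" using rT T(1) by auto
  have mem: "contract_vertex T w \<in> ?Y' \<longleftrightarrow> w \<in> Y" for w
    using rT T(1) by (cases "w \<in> T") auto
  have stage: "f (contract_vertex ?Y' (contract_vertex T w)) = contract_vertex Y w" for w
  proof (cases "w \<in> Y")
    case True then show ?thesis using mem[of w] unfolding f_def by simp
  next
    case False
    then have "w \<notin> ?Y'" "w \<notin> T" using T(1) rT by auto
    then show ?thesis using False rY' unfolding f_def by auto
  qed
  have V: "gV (contract (contract G T) ?Y') = (gV G - Y) \<union> {rep ?Y'}"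
    using T(1) rT by auto
  have "bij_betw f ((gV G - Y) \<union> {rep ?Y'}) ((gV G - Y) \<union> {rep Y})"
    unfolding bij_betw_def inj_on_def f_def using rY rY' by auto
  then have bf: "bij_betw f (gV (contract (contract G T) ?Y')) (gV (contract G Y))"
    unfolding V by simp
  have sub: "contract_vertex T ` A \<subseteq> ?Y' \<longleftrightarrow> A \<subseteq> Y" for A
    unfolding image_subset_iff using mem by blast
  have E: "gE (contract (contract G T) ?Y') = gE (contract G Y)"
    using sub T(1) by auto
  have "f ` ends (contract (contract G T) ?Y') e = ends (contract G Y) e" for e
  proof -
    have "f ` ends (contract (contract G T) ?Y') e
        = (\<lambda>w. f (contract_vertex ?Y' (contract_vertex T w))) ` ends G e"
      by (simp only: contract_simps image_image)
    then show ?thesis by (simp only: stage contract_simps)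
  qed
  then show ?thesis unfolding iso_isom isom_def using bf E by (metis bij_betw_id id_apply)
qed

lemma less4: "(j::nat) < 4 \<longleftrightarrow> j=0 \<or> j=1 \<or> j=2 \<or> j=3" by auto

lemma K4_E: "gE K4 = {(0,1),(0,2),(0,3),(1,2),(1,3),(2,3)}"
  unfolding K4_def by (auto simp: less4)

lemma K4_V: "gV K4 = {0..<4}" unfolding K4_def by simp

lemma K4_ends: "ends K4 (i, j) = {i, j}" unfolding K4_def by simp

lemma wf_K4: "wf_graph K4"
  unfolding wf_graph_def K4_E K4_V by (simp add: K4_ends)

lemma card_K4: "card (gV K4) = 4" by (simp add: K4_V)

lemma K4_adj: "adj K4 i j \<longleftrightarrow> i \<noteq> j \<and> i < 4 \<and> j < 4"
proof
  assume "adj K4 i j"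
  then obtain e where e: "e \<in> gE K4" "ends K4 e = {i, j}" unfolding adj_def by blast
  obtain k l where kl: "e = (k, l)" by fastforce
  have "k < l" "l < 4" using e(1) kl unfolding K4_def by auto
  moreover have "{k, l} = {i, j}" using e(2) kl K4_ends by simp
  ultimately show "i \<noteq> j \<and> i < 4 \<and> j < 4" by (auto simp: doubleton_eq_iff)
next
  assume a: "i \<noteq> j \<and> i < 4 \<and> j < 4"
  show "adj K4 i j" unfolding adj_def
  proof (cases "i < j")
    case True then show "\<exists>e\<in>gE K4. ends K4 e = {i, j}" using a
      by (intro bexI[of _ "(i,j)"]) (auto simp: K4_def)
  next
    case False then have "(j, i) \<in> gE K4" "ends K4 (j,i) = {i,j}" using a by (auto simp: K4_def)
    then show "\<exists>e\<in>gE K4. ends K4 e = {i, j}" by blast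
  qed
qed


lemma K4_degree: "v \<in> gV K4 \<Longrightarrow> degree K4 v = 3"
proof -
  assume "v \<in> gV K4"
  then have "v = 0 \<or> v = 1 \<or> v = 2 \<or> v = 3" by (auto simp: K4_V)
  moreover have "{e \<in> gE K4. 0 \<in> ends K4 e} = {(0,1),(0,2),(0,3)}" by (auto simp: K4_E K4_ends)
  moreover have "{e \<in> gE K4. 1 \<in> ends K4 e} = {(0,1),(1,2),(1,3)}" by (auto simp: K4_E K4_ends)
  moreover have "{e \<in> gE K4. 2 \<in> ends K4 e} = {(0,2),(1,2),(2,3)}" by (auto simp: K4_E K4_ends)
  moreover have "{e \<in> gE K4. 3 \<in> ends K4 e} = {(0,3),(1,3),(2,3)}" by (auto simp: K4_E K4_ends)
  ultimately show ?thesis unfolding degree_def by (elim disjE) simp_all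
qed

lemma card_ge2_obtain:
  assumes "card A \<ge> 2" obtains p q where "p \<in> A" "q \<in> A" "p \<noteq> q"
proof -
  have fin: "finite A" using assms by (metis card.infinite not_numeral_le_zero)
  have "\<not> card A \<le> Suc 0" using assms by simp
  then have "\<not> (\<forall>a\<in>A. \<forall>b\<in>A. a = b)" using card_le_Suc0_iff_eq[OF fin] by simp
  then show ?thesis using that by blast
qed

lemma complete_no_3cut:
  assumes wf: "wf_graph H" and c4: "card (gV H) = 4" and cpl: "\<forall>u\<in>gV H. \<forall>v\<in>gV H. u \<noteq> v \<longrightarrow> adj H u v"
  shows "\<not> nontrivial_3cut H X"
proof
  assume nt: "nontrivial_3cut H X"
  then have XV: "X \<subseteq> gV H" and cX: "card X \<ge> 2" and cY: "card (gV H - X) \<ge> 2"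
    and c3: "card (cut H X) = 3" unfolding nontrivial_3cut_def by auto
  have fin: "finite (gV H)" using wf_graph_finite(1)[OF wf] .
  obtain p q where pq: "p \<in> X" "q \<in> X" "p \<noteq> q" using card_ge2_obtain[OF cX] by blast
  obtain r s where rs: "r \<in> gV H - X" "s \<in> gV H - X" "r \<noteq> s" using card_ge2_obtain[OF cY] by blast
  have inc: "e \<in> cut H X" if "e \<in> gE H" "ends H e = {a, b}" "a \<in> X" "b \<notin> X" for e a b
  proof -
    have "ends H e \<inter> X = {a}" using that by auto
    then show ?thesis unfolding cut_def using that by auto
  qed
  have A: "\<exists>e\<in>gE H. ends H e = {u, v}" if "u \<in> gV H" "v \<in> gV H" "u \<noteq> v" for u v
    using cpl that unfolding adj_def by blast
  have pV: "p \<in> gV H" "q \<in> gV H" using pq XV by auto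
  have rV: "r \<in> gV H" "s \<in> gV H" "r \<notin> X" "s \<notin> X" using rs by auto
  have ne: "p \<noteq> r" "p \<noteq> s" "q \<noteq> r" "q \<noteq> s" using pq rV by auto
  obtain e1 where e1: "e1 \<in> gE H" "ends H e1 = {p, r}" using A[OF pV(1) rV(1) ne(1)] by blast
  obtain e2 where e2: "e2 \<in> gE H" "ends H e2 = {p, s}" using A[OF pV(1) rV(2) ne(2)] by blast
  obtain e3 where e3: "e3 \<in> gE H" "ends H e3 = {q, r}" using A[OF pV(2) rV(1) ne(3)] by blast
  obtain e4 where e4: "e4 \<in> gE H" "ends H e4 = {q, s}" using A[OF pV(2) rV(2) ne(4)] by blast
  have sub: "{e1, e2, e3, e4} \<subseteq> cut H X" using inc[OF e1] inc[OF e2] inc[OF e3] inc[OF e4] pq rV by auto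
  have dist: "e1 \<noteq> e2" "e1 \<noteq> e3" "e1 \<noteq> e4" "e2 \<noteq> e3" "e2 \<noteq> e4" "e3 \<noteq> e4"
    using e1(2) e2(2) e3(2) e4(2) pq(3) rs(3) ne by (auto simp: doubleton_eq_iff)
  have c4: "card {e1, e2, e3, e4} = 4" using dist by auto
  have fc: "finite (cut H X)" using wf_graph_finite(2)[OF wf] unfolding cut_def by auto
  have "card {e1, e2, e3, e4} \<le> card (cut H X)" using card_mono[OF fc sub] .
  then have "card (cut H X) \<ge> 4" using c4 by simp
  then show False using c3 by simp
qed

lemma iso_K4_complete:
  assumes wf: "wf_graph H" and i: "iso H K4"
  shows "card (gV H) = 4" "\<forall>u\<in>gV H. \<forall>v\<in>gV H. u \<noteq> v \<longrightarrow> adj H u v"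
proof -
  obtain f g where im: "isom H K4 f g" using i iso_isom by blast
  show "card (gV H) = 4" using isom_card[OF im] card_K4 by simp
  have bf: "bij_betw f (gV H) (gV K4)" using im unfolding isom_def by auto
  show "\<forall>u\<in>gV H. \<forall>v\<in>gV H. u \<noteq> v \<longrightarrow> adj H u v"
  proof (intro ballI impI)
    fix u v assume uv: "u \<in> gV H" "v \<in> gV H" "u \<noteq> v"
    then have "f u \<noteq> f v" "f u \<in> gV K4" "f v \<in> gV K4" using bf by (auto simp: bij_betw_def dest: inj_onD)
    then have "adj K4 (f u) (f v)" by (auto simp: K4_adj K4_V)
    then show "adj H u v" using isom_adj[OF wf im uv(1,2)] by simp
  qed
qed

lemma iso_K4_no_3cut: "wf_graph H \<Longrightarrow> iso H K4 \<Longrightarrow> \<not> nontrivial_3cut H X"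
  using complete_no_3cut iso_K4_complete by metis


lemma simple_K4: "simple K4"
  unfolding simple_def
proof (intro ballI impI)
  fix e1 e2 assume e: "e1 \<in> gE K4" "e2 \<in> gE K4" "ends K4 e1 = ends K4 e2"
  obtain i j where ij: "e1 = (i, j)" "i < j" using e(1) unfolding K4_def by auto
  obtain k l where kl: "e2 = (k, l)" "k < l" using e(2) unfolding K4_def by auto
  have "{i, j} = {k, l}" using e(3) ij kl by (simp add: K4_ends)
  then have "(i = k \<and> j = l) \<or> (i = l \<and> j = k)" by (simp add: doubleton_eq_iff)
  then show "e1 = e2" using ij kl by auto
qed

lemma card_K4_edges: "card (gE K4) = 6" by (simp add: K4_E)

lemma iso_at_imp_iso: "iso_at G u H v \<Longrightarrow> iso G H"
  unfolding iso_at_isom iso_isom by blast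

lemma iso_at_K4_complete:
  assumes wf: "wf_graph H" and V: "gV H = {p, q, s, t}"
    and d: "p \<noteq> q" "p \<noteq> s" "p \<noteq> t" "q \<noteq> s" "q \<noteq> t" "s \<noteq> t"
    and cpl: "\<forall>u\<in>gV H. \<forall>v\<in>gV H. u \<noteq> v \<longrightarrow> adj H u v" and cE: "card (gE H) = 6"
  shows "iso_at H t K4 3"
proof -
  define f where "f = (\<lambda>x. if x = p then 0 else if x = q then 1 else if x = s then 2 else (3::nat))"
  have fv: "f p = 0" "f q = 1" "f s = 2" "f t = 3" unfolding f_def using d by auto
  have bf: "bij_betw f (gV H) (gV K4)"
    unfolding bij_betw_def V K4_V
  proof
    show "inj_on f {p, q, s, t}" unfolding inj_on_def using fv by auto
    show "f ` {p, q, s, t} = {0..<4}" using fv by (auto simp: less4)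
  qed
  have injf: "inj_on f (gV H)" using bf by (simp add: bij_betw_def)
  have fr: "f u \<in> gV K4" if "u \<in> gV H" for u using bf that by (auto simp: bij_betw_def)
  have ad: "\<forall>u\<in>gV H. \<forall>v\<in>gV H. adj K4 (f u) (f v) \<longleftrightarrow> adj H u v"
  proof (intro ballI)
    fix u v assume uv: "u \<in> gV H" "v \<in> gV H"
    have "adj K4 (f u) (f v) \<longleftrightarrow> f u \<noteq> f v" using fr[OF uv(1)] fr[OF uv(2)] by (auto simp: K4_adj K4_V)
    also have "\<dots> \<longleftrightarrow> u \<noteq> v" using injf uv by (auto dest: inj_onD)
    also have "\<dots> \<longleftrightarrow> adj H u v" using cpl uv adj_irrefl[OF wf] by metis
    finally show "adj K4 (f u) (f v) \<longleftrightarrow> adj H u v" .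
  qed
  have "card (gE H) = card (gE K4)" using cE card_K4_edges by simp
  then obtain g where "isom H K4 f g" using isom_of_adj_bij[OF wf wf_K4 bf ad simple_K4] by blast
  then show ?thesis unfolding iso_at_isom using fv(4) by blast
qed

lemma less6: "(j::nat) < 6 \<longleftrightarrow> j=0 \<or> j=1 \<or> j=2 \<or> j=3 \<or> j=4 \<or> j=5" by presburger
lemma C6bar_E: "gE C6bar = {(0,2),(0,3),(0,4),(1,3),(1,4),(1,5),(2,4),(2,5),(3,5)}"
proof (rule set_eqI)
  fix x :: "nat \<times> nat"
  obtain i j where x: "x = (i, j)" by (cases x)
  have "(i < j \<and> j < 6 \<and> j - i \<noteq> 1 \<and> j - i \<noteq> 5) \<longleftrightarrow>
        (i, j) \<in> {(0,2),(0,3),(0,4),(1,3),(1,4),(1,5),(2,4),(2,5),(3,5)}"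
  proof
    assume a: "i < j \<and> j < 6 \<and> j - i \<noteq> 1 \<and> j - i \<noteq> 5"
    then have "i < 6" "j < 6" by auto
    then have "(i=0 \<or> i=1 \<or> i=2 \<or> i=3 \<or> i=4 \<or> i=5) \<and> (j=0 \<or> j=1 \<or> j=2 \<or> j=3 \<or> j=4 \<or> j=5)"
      unfolding less6 by blast
    then show "(i, j) \<in> {(0,2),(0,3),(0,4),(1,3),(1,4),(1,5),(2,4),(2,5),(3,5)}" using a
      by (elim conjE disjE) simp_all
  next
    assume "(i, j) \<in> {(0,2),(0,3),(0,4),(1,3),(1,4),(1,5),(2,4),(2,5),(3,5)}"
    then show "i < j \<and> j < 6 \<and> j - i \<noteq> 1 \<and> j - i \<noteq> 5" by (elim insertE) auto
  qed
  then show "x \<in> gE C6bar \<longleftrightarrow> x \<in> {(0,2),(0,3),(0,4),(1,3),(1,4),(1,5),(2,4),(2,5),(3,5)}"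
    unfolding C6bar_def x by simp
qed

lemma C6bar_V: "gV C6bar = {0..<6}" unfolding C6bar_def by simp

lemma C6bar_ends: "ends C6bar (i, j) = {i, j}" unfolding C6bar_def by simp

lemma wf_C6bar: "wf_graph C6bar"
  unfolding wf_graph_def C6bar_E C6bar_V by (simp add: C6bar_ends)

lemma C6bar_simple: "simple C6bar"
  unfolding simple_def
proof (intro ballI impI)
  fix e1 e2 assume e: "e1 \<in> gE C6bar" "e2 \<in> gE C6bar" "ends C6bar e1 = ends C6bar e2"
  obtain i j where ij: "e1 = (i, j)" "i < j" using e(1) unfolding C6bar_def by auto
  obtain k l where kl: "e2 = (k, l)" "k < l" using e(2) unfolding C6bar_def by auto
  have "{i, j} = {k, l}" using e(3) ij kl by (simp add: C6bar_ends)
  then have "(i = k \<and> j = l) \<or> (i = l \<and> j = k)" by (simp add: doubleton_eq_iff)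
  then show "e1 = e2" using ij kl by auto
qed

lemma card_C6bar_edges: "card (gE C6bar) = 9" by (simp add: C6bar_E)

lemma C6bar_adj: "adj C6bar i j \<longleftrightarrow> (i, j) \<in> gE C6bar \<or> (j, i) \<in> gE C6bar"
proof
  assume "adj C6bar i j"
  then obtain e where e: "e \<in> gE C6bar" "ends C6bar e = {i, j}" unfolding adj_def by blast
  obtain p q where pq: "e = (p, q)" by (cases e)
  then have "{p, q} = {i, j}" using e(2) by (simp add: C6bar_ends)
  then have "(p = i \<and> q = j) \<or> (p = j \<and> q = i)" by (simp add: doubleton_eq_iff)
  then show "(i, j) \<in> gE C6bar \<or> (j, i) \<in> gE C6bar" using e(1) pq by auto
next
  assume "(i, j) \<in> gE C6bar \<or> (j, i) \<in> gE C6bar"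
  then show "adj C6bar i j" unfolding adj_def
  proof
    assume "(i, j) \<in> gE C6bar" then show "\<exists>e\<in>gE C6bar. ends C6bar e = {i, j}"
      by (intro bexI[of _ "(i,j)"]) (auto simp: C6bar_ends)
  next
    assume "(j, i) \<in> gE C6bar" then show "\<exists>e\<in>gE C6bar. ends C6bar e = {i, j}"
      by (intro bexI[of _ "(j,i)"]) (auto simp: C6bar_ends insert_commute)
  qed
qed

lemma C6bar_contract_adj:
  assumes "(i, j) \<in> gE C6bar" "\<not> {i, j} \<subseteq> X" "contract_vertex X i = u" "contract_vertex X j = v"
  shows "adj (contract C6bar X) u v"
proof -
  have "ends (contract C6bar X) (i, j) = {contract_vertex X i, contract_vertex X j}"
    by (simp only: contract_simps C6bar_ends image_insert image_empty)
  then have "ends (contract C6bar X) (i, j) = {u, v}" using assms(3,4) by simp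
  moreover have "(i, j) \<in> gE (contract C6bar X)" using assms(1,2) by (simp add: C6bar_ends)
  ultimately show ?thesis unfolding adj_def by blast
qed

section \<open>\<open>K\<^sub>4\<close>-decompositions as trees of cut-contractions\<close>

inductive K4_decomposable :: "('v, 'e) mgraph \<Rightarrow> bool" where
  base: "wf_graph G \<Longrightarrow> iso G K4 \<Longrightarrow> K4_decomposable G"
| step: "wf_graph G \<Longrightarrow> nontrivial_3cut G X \<Longrightarrow> K4_decomposable (contract G X) \<Longrightarrow>
         K4_decomposable (contract G (gV G - X)) \<Longrightarrow> K4_decomposable G"

lemma K4_decomposable_card: "K4_decomposable G \<Longrightarrow> card (gV G) \<ge> 4"
proof (induction rule: K4_decomposable.induct)
  case (base G) then show ?case using iso_K4_complete(1) by fastforce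
next
  case (step G X) then show ?case using card_contract_nontrivial_3cut(3)[OF step(1,2)] by simp
qed

lemma K4_decomposable_card_4: "K4_decomposable G \<Longrightarrow> card (gV G) = 4 \<Longrightarrow> iso G K4"
proof (induction rule: K4_decomposable.induct)
  case (base G) then show ?case by simp
next
  case (step G X)
  then show ?case
    using card_contract_nontrivial_3cut(3)[OF step(1,2)] K4_decomposable_card[OF step(3)]
      K4_decomposable_card[OF step(4)] by simp
qed

lemma dec_step_append: "dec_step Ls Ls' \<Longrightarrow> dec_step (xs @ Ls @ ys) (xs @ Ls' @ ys)"
proof -
  assume "dec_step Ls Ls'"
  then obtain a H b X where "Ls = a @ H # b" "nontrivial_3cut H X"
    "Ls' = a @ contract H X # contract H (gV H - X) # b" unfolding dec_step_def by blast
  then show ?thesis unfolding dec_step_def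
    by (intro exI[of _ "xs @ a"] exI[of _ H] exI[of _ "b @ ys"] exI[of _ X]) simp
qed

lemma dec_steps_append: "dec_step\<^sup>*\<^sup>* Ls Ls' \<Longrightarrow> dec_step\<^sup>*\<^sup>* (xs @ Ls @ ys) (xs @ Ls' @ ys)"
proof (induction rule: rtranclp_induct)
  case base then show ?case by simp
next
  case (step y z) then show ?case using dec_step_append rtranclp.rtrancl_into_rtrancl by metis
qed

lemma dec_steps_split:
  "dec_step\<^sup>*\<^sup>* M L \<Longrightarrow> M = xs @ ys \<Longrightarrow>
   \<exists>L1 L2. L = L1 @ L2 \<and> dec_step\<^sup>*\<^sup>* xs L1 \<and> dec_step\<^sup>*\<^sup>* ys L2"
proof (induction L rule: rtranclp_induct)
  case base then show ?case by blast
next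
  case (step M' L')
  then obtain M1 M2 where M: "M' = M1 @ M2" "dec_step\<^sup>*\<^sup>* xs M1" "dec_step\<^sup>*\<^sup>* ys M2" by blast
  obtain a H b X where d: "M' = a @ H # b" "nontrivial_3cut H X"
    "L' = a @ contract H X # contract H (gV H - X) # b" using step(2) unfolding dec_step_def by blast
  have "M1 @ M2 = a @ (H # b)" using M(1) d(1) by simp
  then obtain us where us: "(M1 = a @ us \<and> us @ M2 = H # b) \<or> (M1 @ us = a \<and> M2 = us @ H # b)"
    unfolding append_eq_append_conv2 by blast
  then show ?case
  proof
    assume u: "M1 = a @ us \<and> us @ M2 = H # b"
    show ?case
    proof (cases us)
      case Nil
      then have "M2 = H # b" "M1 = a" using u by auto
      then have "dec_step M2 (contract H X # contract H (gV H - X) # b)"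
        unfolding dec_step_def using d(2) by (intro exI[of _ "[]"]) auto
      then show ?thesis using M \<open>M1 = a\<close> d(3)
        by (intro exI[of _ M1] exI[of _ "contract H X # contract H (gV H - X) # b"]) auto
    next
      case (Cons u us')
      then have "u = H" "b = us' @ M2" "M1 = a @ H # us'" using u by auto
      then have "dec_step M1 (a @ contract H X # contract H (gV H - X) # us')"
        unfolding dec_step_def using d(2) by blast
      then show ?thesis using M \<open>b = us' @ M2\<close> d(3)
        by (intro exI[of _ "a @ contract H X # contract H (gV H - X) # us'"] exI[of _ M2]) auto
    qed
  next
    assume u: "M1 @ us = a \<and> M2 = us @ H # b"
    then have "dec_step M2 (us @ contract H X # contract H (gV H - X) # b)"
      unfolding dec_step_def using d(2) by blast
    then show ?case using M u d(3)
      by (intro exI[of _ M1] exI[of _ "us @ contract H X # contract H (gV H - X) # b"]) auto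
  qed
qed

lemma dec_step_single: "dec_step [G] M \<Longrightarrow> \<exists>X. nontrivial_3cut G X \<and> M = [contract G X, contract G (gV G - X)]"
  unfolding dec_step_def by (auto simp: Cons_eq_append_conv)

definition final_K4_list :: "('v, 'e) mgraph list \<Rightarrow> bool" where
  "final_K4_list L \<longleftrightarrow> (\<forall>H\<in>set L. \<not> (\<exists>X. nontrivial_3cut H X)) \<and> (\<forall>H\<in>set L. iso H K4)"

lemma has_K4_decomposition_final: "has_K4_decomposition G \<longleftrightarrow> (\<exists>L. dec_step\<^sup>*\<^sup>* [G] L \<and> final_K4_list L)"
  unfolding has_K4_decomposition_def final_K4_list_def by simp

lemma final_K4_list_append: "final_K4_list (L1 @ L2) \<longleftrightarrow> final_K4_list L1 \<and> final_K4_list L2"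
  unfolding final_K4_list_def by auto

lemma K4_decomposable_imp_final: "K4_decomposable G \<Longrightarrow> \<exists>L. dec_step\<^sup>*\<^sup>* [G] L \<and> final_K4_list L"
proof (induction rule: K4_decomposable.induct)
  case (base G)
  then show ?case using iso_K4_no_3cut[OF base(1,2)]
    by (intro exI[of _ "[G]"]) (auto simp: final_K4_list_def)
next
  case (step G X)
  obtain L1 where L1: "dec_step\<^sup>*\<^sup>* [contract G X] L1" "final_K4_list L1" using step.IH(1) by blast
  obtain L2 where L2: "dec_step\<^sup>*\<^sup>* [contract G (gV G - X)] L2" "final_K4_list L2" using step.IH(2) by blast
  have s1: "dec_step [G] [contract G X, contract G (gV G - X)]"
    unfolding dec_step_def using step(2) by (intro exI[of _ "[]"]) auto
  have s2: "dec_step\<^sup>*\<^sup>* ([] @ [contract G X] @ [contract G (gV G - X)]) ([] @ L1 @ [contract G (gV G - X)])"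
    by (rule dec_steps_append[OF L1(1)])
  have s3: "dec_step\<^sup>*\<^sup>* (L1 @ [contract G (gV G - X)] @ []) (L1 @ L2 @ [])"
    by (rule dec_steps_append[OF L2(1)])
  have "dec_step\<^sup>*\<^sup>* [G] (L1 @ L2)" using s1 s2 s3 by simp
  then show ?case using L1(2) L2(2) final_K4_list_append by blast
qed

lemma final_imp_K4_decomposable:
  "wf_graph G \<Longrightarrow> dec_step\<^sup>*\<^sup>* [G] L \<Longrightarrow> final_K4_list L \<Longrightarrow> K4_decomposable G"
proof (induction "card (gV G)" arbitrary: G L rule: less_induct)
  case less
  show ?case
  using less(3)
  proof (cases rule: converse_rtranclpE)
    case base
    then have "iso G K4" using less(4) unfolding final_K4_list_def by auto
    then show ?thesis using K4_decomposable.base less(2) by blast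
  next
    case (step M)
    then obtain X where X: "nontrivial_3cut G X" "M = [contract G X, contract G (gV G - X)]"
      using dec_step_single by blast
    then obtain L1 L2 where L: "L = L1 @ L2" "dec_step\<^sup>*\<^sup>* [contract G X] L1"
      "dec_step\<^sup>*\<^sup>* [contract G (gV G - X)] L2"
      using dec_steps_split[OF step(2), of "[contract G X]" "[contract G (gV G - X)]"] by auto
    have f: "final_K4_list L1" "final_K4_list L2" using L(1) less(4) final_K4_list_append by auto
    have k1: "K4_decomposable (contract G X)"
      using less(1)[OF card_contract_nontrivial_3cut(1)[OF less(2) X(1)] wf_graph_contract_nontrivial_3cut(1)[OF less(2) X(1)] L(2) f(1)] .
    have k2: "K4_decomposable (contract G (gV G - X))"
      using less(1)[OF card_contract_nontrivial_3cut(2)[OF less(2) X(1)] wf_graph_contract_nontrivial_3cut(2)[OF less(2) X(1)] L(3) f(2)] .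
    show ?thesis using K4_decomposable.step[OF less(2) X(1) k1 k2] .
  qed
qed

lemma has_K4_decomposition_iff: "wf_graph G \<Longrightarrow> has_K4_decomposition G \<longleftrightarrow> K4_decomposable G"
  using has_K4_decomposition_final K4_decomposable_imp_final final_imp_K4_decomposable by metis

lemma K4_decomposable_iso: "K4_decomposable G \<Longrightarrow> wf_graph G' \<Longrightarrow> iso G' G \<Longrightarrow> K4_decomposable G'"
proof (induction arbitrary: G' rule: K4_decomposable.induct)
  case (base G)
  then show ?case using K4_decomposable.base iso_trans by blast
next
  case (step G X)
  obtain f g where im0: "isom G' G f g" using step.prems(2) iso_isom by blast
  define f' where "f' = inv_into (gV G') f"
  define g' where "g' = inv_into (gE G') g"
  have im: "isom G G' f' g'" unfolding f'_def g'_def using isom_sym[OF step.prems(1) im0] .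
  have wfG: "wf_graph G" using step(1) .
  have X: "X \<subseteq> gV G" "card X \<ge> 2" "card (gV G - X) \<ge> 2" "card (cut G X) = 3"
    using step(2) unfolding nontrivial_3cut_def by auto
  have bf: "bij_betw f' (gV G) (gV G')" using im unfolding isom_def by auto
  have inj: "inj_on f' (gV G)" and fV: "f' ` gV G = gV G'" using bf by (auto simp: bij_betw_def)
  have img: "f' ` (gV G - X) = gV G' - f' ` X" using inj_on_image_set_diff[OF inj _ X(1)] fV by simp
  have cX: "card (f' ` X) = card X" using card_image inj_on_subset[OF inj X(1)] by blast
  have cY: "card (f' ` (gV G - X)) = card (gV G - X)" using card_image inj_on_subset[OF inj, of "gV G - X"] by blast
  have sX: "f' ` X \<subseteq> gV G'" using X(1) fV by auto
  have nt': "nontrivial_3cut G' (f' ` X)"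
    unfolding nontrivial_3cut_def using sX X cX cY img isom_cut(2)[OF wfG im X(1)] fV X(1) by auto
  have Xne: "X \<noteq> {}" using X(2) by (intro notI) simp
  have Yne: "gV G - X \<noteq> {}" using X(3) by (intro notI) simp
  have i1: "iso (contract G X) (contract G' (f' ` X))" using iso_contract[OF wfG im X(1) Xne] .
  have i2: "iso (contract G (gV G - X)) (contract G' (gV G' - f' ` X))"
    using iso_contract[OF wfG im _ Yne] img by auto
  have w1: "wf_graph (contract G X)" and w2: "wf_graph (contract G (gV G - X))"
    using wf_graph_contract_nontrivial_3cut[OF wfG step(2)] by auto
  have w1': "wf_graph (contract G' (f' ` X))" and w2': "wf_graph (contract G' (gV G' - f' ` X))"
    using wf_graph_contract_nontrivial_3cut[OF step.prems(1) nt'] by auto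
  have k1: "K4_decomposable (contract G' (f' ` X))" using step.IH(1)[OF w1' iso_sym[OF w1 i1]] .
  have k2: "K4_decomposable (contract G' (gV G' - f' ` X))" using step.IH(2)[OF w2' iso_sym[OF w2 i2]] .
  show ?case using K4_decomposable.step[OF step.prems(1) nt' k1 k2] .
qed

lemma cut_C6bar: "cut C6bar {0, 2, 4} = {(0,3),(1,4),(2,5)}"
proof (rule set_eqI)
  fix e
  show "e \<in> cut C6bar {0, 2, 4} \<longleftrightarrow> e \<in> {(0,3),(1,4),(2,5)}"
  proof
    assume "e \<in> cut C6bar {0, 2, 4}"
    then have "e \<in> gE C6bar" "card (ends C6bar e \<inter> {0, 2, 4}) = 1" unfolding cut_def by auto
    then show "e \<in> {(0,3),(1,4),(2,5)}"
      unfolding C6bar_E by (elim insertE emptyE) (simp_all add: C6bar_ends)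
  next
    assume "e \<in> {(0,3),(1,4),(2,5)}"
    then show "e \<in> cut C6bar {0, 2, 4}"
      unfolding cut_def C6bar_E by (elim insertE emptyE) (simp_all add: C6bar_ends)
  qed
qed

lemma C6bar_contract_even: "iso (contract C6bar {0, 2, 4}) K4"
proof -
  let ?X = "{0, 2, 4} :: nat set"
  have r: "rep ?X \<in> ?X" using rep_in[of ?X] by simp
  have V: "gV (contract C6bar ?X) = {1, 3, 5, rep ?X}" by (auto simp: C6bar_V less6)
  have E: "gE (contract C6bar ?X) = {(0,3),(1,3),(1,4),(1,5),(2,5),(3,5)}"
    unfolding contract_simps C6bar_E by (auto simp: C6bar_ends)
  have a: "adj (contract C6bar ?X) 1 3" "adj (contract C6bar ?X) 1 5" "adj (contract C6bar ?X) 3 5"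
    "adj (contract C6bar ?X) 1 (rep ?X)" "adj (contract C6bar ?X) (rep ?X) 3"
    "adj (contract C6bar ?X) (rep ?X) 5"
    by (rule C6bar_contract_adj[of 1 3] C6bar_contract_adj[of 1 5] C6bar_contract_adj[of 3 5]
        C6bar_contract_adj[of 1 4] C6bar_contract_adj[of 0 3] C6bar_contract_adj[of 2 5];
        simp add: C6bar_E)+
  have "\<forall>u\<in>gV (contract C6bar ?X). \<forall>v\<in>gV (contract C6bar ?X). u \<noteq> v \<longrightarrow> adj (contract C6bar ?X) u v"
    unfolding V using a adj_sym by (metis empty_iff insert_iff)
  moreover have "wf_graph (contract C6bar ?X)" by (rule wf_contract[OF wf_C6bar]) (auto simp: C6bar_V)
  ultimately have "iso_at (contract C6bar ?X) (rep ?X) K4 3"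
    using iso_at_K4_complete[OF _ V] r unfolding E by auto
  then show ?thesis by (rule iso_at_imp_iso)
qed

lemma C6bar_contract_odd: "iso (contract C6bar {1, 3, 5}) K4"
proof -
  let ?X = "{1, 3, 5} :: nat set"
  have r: "rep ?X \<in> ?X" using rep_in[of ?X] by simp
  have V: "gV (contract C6bar ?X) = {0, 2, 4, rep ?X}" by (auto simp: C6bar_V less6)
  have E: "gE (contract C6bar ?X) = {(0,2),(0,3),(0,4),(1,4),(2,4),(2,5)}"
    unfolding contract_simps C6bar_E by (auto simp: C6bar_ends)
  have a: "adj (contract C6bar ?X) 0 2" "adj (contract C6bar ?X) 0 4" "adj (contract C6bar ?X) 2 4"
    "adj (contract C6bar ?X) 0 (rep ?X)" "adj (contract C6bar ?X) (rep ?X) 4"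
    "adj (contract C6bar ?X) 2 (rep ?X)"
    by (rule C6bar_contract_adj[of 0 2] C6bar_contract_adj[of 0 4] C6bar_contract_adj[of 2 4]
        C6bar_contract_adj[of 0 3] C6bar_contract_adj[of 1 4] C6bar_contract_adj[of 2 5];
        simp add: C6bar_E)+
  have "\<forall>u\<in>gV (contract C6bar ?X). \<forall>v\<in>gV (contract C6bar ?X). u \<noteq> v \<longrightarrow> adj (contract C6bar ?X) u v"
    unfolding V using a adj_sym by (metis empty_iff insert_iff)
  moreover have "wf_graph (contract C6bar ?X)" by (rule wf_contract[OF wf_C6bar]) (auto simp: C6bar_V)
  ultimately have "iso_at (contract C6bar ?X) (rep ?X) K4 3"
    using iso_at_K4_complete[OF _ V] r unfolding E by auto
  then show ?thesis by (rule iso_at_imp_iso)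
qed

lemma K4_decomposable_C6bar: "K4_decomposable C6bar"
proof -
  let ?X = "{0, 2, 4} :: nat set"
  have XV: "?X \<subseteq> gV C6bar" by (auto simp: C6bar_V)
  have Y: "gV C6bar - ?X = {1, 3, 5}" by (auto simp: C6bar_V less6)
  have nt: "nontrivial_3cut C6bar ?X" unfolding nontrivial_3cut_def cut_C6bar Y using XV by simp
  have "K4_decomposable (contract C6bar ?X)"
    using K4_decomposable.base[OF wf_contract[OF wf_C6bar XV] C6bar_contract_even] by simp
  moreover have "K4_decomposable (contract C6bar (gV C6bar - ?X))" unfolding Y
    using K4_decomposable.base[OF wf_contract[OF wf_C6bar] C6bar_contract_odd] by (simp add: C6bar_V)
  ultimately show ?thesis using K4_decomposable.step[OF wf_C6bar nt] by blast
qed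

section \<open>Triangles in cubic 3-edge-connected graphs\<close>

definition triangle :: "('v, 'e) mgraph \<Rightarrow> 'v set \<Rightarrow> bool" where
  "triangle G T \<longleftrightarrow> (\<exists>a b c. T = {a, b, c} \<and> a \<noteq> b \<and> b \<noteq> c \<and> a \<noteq> c \<and>
      a \<in> gV G \<and> b \<in> gV G \<and> c \<in> gV G \<and> adj G a b \<and> adj G b c \<and> adj G a c)"

lemma triangle_adj: assumes "triangle G T" "u \<in> T" "v \<in> T" "u \<noteq> v" shows "adj G u v"
proof -
  obtain a b c where t: "T = {a, b, c}" "adj G a b" "adj G b c" "adj G a c"
    using assms(1) unfolding triangle_def by blast
  have s: "adj G b a" "adj G c b" "adj G c a" using t(2-4) adj_sym by metis+
  show ?thesis using assms(2-4) t s by auto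
qed

lemma triangle_card: "triangle G T \<Longrightarrow> card T = 3"
  unfolding triangle_def by auto

lemma triangle_subset: "triangle G T \<Longrightarrow> T \<subseteq> gV G"
  unfolding triangle_def by auto

lemma triangle_contract_lift:
  assumes "triangle (contract G X) T" "rep X \<notin> T" "X \<noteq> {}"
  shows "triangle G T" "T \<subseteq> gV G - X"
proof -
  obtain a b c where t: "T = {a, b, c}" "a \<noteq> b" "b \<noteq> c" "a \<noteq> c"
    "a \<in> gV (contract G X)" "b \<in> gV (contract G X)" "c \<in> gV (contract G X)"
    "adj (contract G X) a b" "adj (contract G X) b c" "adj (contract G X) a c"
    using assms(1) unfolding triangle_def by blast
  have V: "a \<in> gV G - X" "b \<in> gV G - X" "c \<in> gV G - X" using t(1,5,6,7) assms(2) by auto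
  show "T \<subseteq> gV G - X" using V t(1) by auto
  show "triangle G T" unfolding triangle_def using t V adj_contract_lift[OF _ _ _ assms(3)]
    by (intro exI[of _ a] exI[of _ b] exI[of _ c]) auto
qed

lemma triangle_contract:
  assumes "triangle G T" "T \<inter> X = {}"
  shows "triangle (contract G X) T"
proof -
  obtain a b c where t: "T = {a, b, c}" "a \<noteq> b" "b \<noteq> c" "a \<noteq> c"
    "a \<in> gV G" "b \<in> gV G" "c \<in> gV G" "adj G a b" "adj G b c" "adj G a c"
    using assms(1) unfolding triangle_def by blast
  have n: "a \<notin> X" "b \<notin> X" "c \<notin> X" using t(1) assms(2) by auto
  show ?thesis unfolding triangle_def using t n adj_contract
    by (intro exI[of _ a] exI[of _ b] exI[of _ c]) auto
qed

lemma triangle_in_triangle: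
  assumes "triangle G T" "u \<in> T" shows "in_triangle G u"
proof -
  obtain a b c where t: "T = {a, b, c}" "a \<noteq> b" "b \<noteq> c" "a \<noteq> c"
    "adj G a b" "adj G b c" "adj G a c" using assms(1) unfolding triangle_def by blast
  have s: "adj G b a" "adj G c b" "adj G c a" using t(5-7) adj_sym by metis+
  have "u = a \<or> u = b \<or> u = c" using assms(2) t(1) by auto
  then show ?thesis unfolding in_triangle_def
  proof (elim disjE)
    assume "u = a" then show "\<exists>v w. u \<noteq> v \<and> v \<noteq> w \<and> u \<noteq> w \<and> adj G u v \<and> adj G v w \<and> adj G u w"
      using t s by blast
  next
    assume "u = b" then show "\<exists>v w. u \<noteq> v \<and> v \<noteq> w \<and> u \<noteq> w \<and> adj G u v \<and> adj G v w \<and> adj G u w"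
      using t s by (intro exI[of _ a] exI[of _ c]) auto
  next
    assume "u = c" then show "\<exists>v w. u \<noteq> v \<and> v \<noteq> w \<and> u \<noteq> w \<and> adj G u v \<and> adj G v w \<and> adj G u w"
      using t s by (intro exI[of _ a] exI[of _ b]) auto
  qed
qed

lemma triangle_edges:
  assumes wf: "wf_graph G" and cub: "cubic G" and ec: "three_edge_connected G"
    and V: "a \<in> gV G" "b \<in> gV G" "c \<in> gV G" and d: "a \<noteq> b" "b \<noteq> c" "a \<noteq> c"
    and ad: "adj G a b" "adj G b c" "adj G a c" and c4: "card (gV G) \<ge> 4"
  obtains eab ebc eac ra rb rc where
    "eab \<in> gE G" "ends G eab = {a, b}" "ebc \<in> gE G" "ends G ebc = {b, c}"
    "eac \<in> gE G" "ends G eac = {a, c}"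
    "cut G {a, b, c} = {ra, rb, rc}" "ra \<noteq> rb" "rb \<noteq> rc" "ra \<noteq> rc"
    "incident G a = {eab, eac, ra}" "incident G b = {eab, ebc, rb}" "incident G c = {eac, ebc, rc}"
proof -
  obtain eab where eab: "eab \<in> gE G" "ends G eab = {a, b}" using ad(1) unfolding adj_def by blast
  obtain ebc where ebc: "ebc \<in> gE G" "ends G ebc = {b, c}" using ad(2) unfolding adj_def by blast
  obtain eac where eac: "eac \<in> gE G" "ends G eac = {a, c}" using ad(3) unfolding adj_def by blast
  have n1: "eab \<noteq> eac" using eab eac d by (auto simp: doubleton_eq_iff)
  have n2: "eab \<noteq> ebc" using eab ebc d by (auto simp: doubleton_eq_iff)
  have n3: "eac \<noteq> ebc" using eac ebc d by (auto simp: doubleton_eq_iff)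
  have inA: "eab \<in> incident G a" "eac \<in> incident G a" using eab eac unfolding incident_def by auto
  have inB: "eab \<in> incident G b" "ebc \<in> incident G b" using eab ebc unfolding incident_def by auto
  have inC: "eac \<in> incident G c" "ebc \<in> incident G c" using eac ebc unfolding incident_def by auto
  obtain ra where ra: "incident G a - {eab, eac} = {ra}"
    using card_incident_minus_two[OF wf cub V(1) inA n1] by (metis card_1_singletonE)
  obtain rb where rb: "incident G b - {eab, ebc} = {rb}"
    using card_incident_minus_two[OF wf cub V(2) inB n2] by (metis card_1_singletonE)
  obtain rc where rc: "incident G c - {eac, ebc} = {rc}"
    using card_incident_minus_two[OF wf cub V(3) inC n3] by (metis card_1_singletonE)
  let ?T = "{a, b, c}"
  have sub: "cut G ?T \<subseteq> {ra, rb, rc}"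
  proof
    fix e assume e: "e \<in> cut G ?T"
    then have eE: "e \<in> gE G" and c1: "card (ends G e \<inter> ?T) = 1" unfolding cut_def by auto
    have "card (ends G eab \<inter> ?T) = 2" using card_ends_Int_superset[OF wf eab(1)] eab(2) by auto
    then have nab: "e \<noteq> eab" using c1 by auto
    have "card (ends G eac \<inter> ?T) = 2" using card_ends_Int_superset[OF wf eac(1)] eac(2) by auto
    then have nac: "e \<noteq> eac" using c1 by auto
    have "card (ends G ebc \<inter> ?T) = 2" using card_ends_Int_superset[OF wf ebc(1)] ebc(2) by auto
    then have nbc: "e \<noteq> ebc" using c1 by auto
    have "ends G e \<inter> ?T \<noteq> {}" using c1 by (cases "ends G e \<inter> ?T = {}") simp_all
    then have "a \<in> ends G e \<or> b \<in> ends G e \<or> c \<in> ends G e" by auto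
    then show "e \<in> {ra, rb, rc}"
    proof (elim disjE)
      assume "a \<in> ends G e"
      then have "e \<in> incident G a - {eab, eac}" using eE nab nac unfolding incident_def by auto
      then show ?thesis using ra by auto
    next
      assume "b \<in> ends G e"
      then have "e \<in> incident G b - {eab, ebc}" using eE nab nbc unfolding incident_def by auto
      then show ?thesis using rb by auto
    next
      assume "c \<in> ends G e"
      then have "e \<in> incident G c - {eac, ebc}" using eE nac nbc unfolding incident_def by auto
      then show ?thesis using rc by auto
    qed
  qed
  have TV: "?T \<subseteq> gV G" using V by auto
  have fin: "finite (gV G)" using wf_graph_finite(1)[OF wf] .
  have cT: "card ?T = 3" using d by auto
  have "card (gV G - ?T) = card (gV G) - 3" using card_Diff_subset[OF _ TV] cT by simp
  then have "gV G - ?T \<noteq> {}" using c4 fin by (intro notI) simp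
  then have ge: "card (cut G ?T) \<ge> 3" using three_edge_connectedD[OF ec TV] by blast
  have le: "card {ra, rb, rc} \<le> 3" by (simp add: card_insert_le_m1)
  have eq: "cut G ?T = {ra, rb, rc}" using card_seteq[OF _ sub] ge le by (meson finite.emptyI finite.insertI le_trans)
  then have c3: "card {ra, rb, rc} = 3" using ge le by simp
  have dr: "ra \<noteq> rb" "rb \<noteq> rc" "ra \<noteq> rc"
    using c3 by (auto simp: card_insert_if split: if_splits)
  have Ea: "incident G a = {eab, eac, ra}" using ra inA by blast
  have Eb: "incident G b = {eab, ebc, rb}" using rb inB by blast
  have Ec: "incident G c = {eac, ebc, rc}" using rc inC by blast
  show ?thesis using that[OF eab ebc eac eq dr Ea Eb Ec] .
qed

lemma nontrivial_3cut_two_neighbours_across: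
  assumes wf: "wf_graph G" and cub: "cubic G" and ec: "three_edge_connected G" and nt: "nontrivial_3cut G X"
    and a: "a \<in> X" and b: "b \<in> gV G" "b \<notin> X" and c: "c \<in> gV G" "c \<notin> X"
    and bc: "b \<noteq> c" and ad: "adj G a b" "adj G a c"
  shows False
proof -
  have X: "X \<subseteq> gV G" "card X \<ge> 2" "card (cut G X) = 3" using nt unfolding nontrivial_3cut_def by auto
  have aV: "a \<in> gV G" using a X(1) by auto
  obtain eab where eab: "eab \<in> gE G" "ends G eab = {a, b}" using ad(1) unfolding adj_def by blast
  obtain eac where eac: "eac \<in> gE G" "ends G eac = {a, c}" using ad(2) unfolding adj_def by blast
  have ab: "a \<noteq> b" "a \<noteq> c" using a b c by auto
  have n1: "eab \<noteq> eac" using eab eac bc by (auto simp: doubleton_eq_iff)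
  have inA: "eab \<in> incident G a" "eac \<in> incident G a" using eab eac unfolding incident_def by auto
  have R: "card (incident G a - {eab, eac}) = 1" using card_incident_minus_two[OF wf cub aV inA n1] .
  have cutab: "eab \<in> cut G X" "eac \<in> cut G X"
    using eab eac a b c ab card_doubleton_Int_eq_1 unfolding cut_def by auto
  have sub: "cut G (X - {a}) \<subseteq> (cut G X - {eab, eac}) \<union> (incident G a - {eab, eac})"
  proof
    fix e assume e: "e \<in> cut G (X - {a})"
    then have eE: "e \<in> gE G" and c1: "card (ends G e \<inter> (X - {a})) = 1" unfolding cut_def by auto
    have "ends G eab \<inter> (X - {a}) = {}" using eab(2) b by auto
    then have nab: "e \<noteq> eab" using c1 by auto
    have "ends G eac \<inter> (X - {a}) = {}" using eac(2) c by auto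
    then have nac: "e \<noteq> eac" using c1 by auto
    show "e \<in> (cut G X - {eab, eac}) \<union> (incident G a - {eab, eac})"
    proof (cases "a \<in> ends G e")
      case True then show ?thesis using eE nab nac unfolding incident_def by auto
    next
      case False
      then have "ends G e \<inter> (X - {a}) = ends G e \<inter> X" by auto
      then show ?thesis using eE c1 nab nac unfolding cut_def by auto
    qed
  qed
  have fc: "finite (cut G X)" using wf_graph_finite(2)[OF wf] unfolding cut_def by auto
  have c2: "card (cut G X - {eab, eac}) = 1" using card_Diff_subset[of "{eab,eac}" "cut G X"] cutab X(3) n1 fc by simp
  have fE: "finite (incident G a)" using finite_incident[OF wf] .
  have "card (cut G (X - {a})) \<le> card ((cut G X - {eab, eac}) \<union> (incident G a - {eab, eac}))"
    using card_mono[OF _ sub] fc fE by blast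
  also have "\<dots> \<le> card (cut G X - {eab, eac}) + card (incident G a - {eab, eac})" by (rule card_Un_le)
  finally have le2: "card (cut G (X - {a})) \<le> 2" using c2 R by simp
  have ne: "X - {a} \<noteq> {}"
  proof
    assume "X - {a} = {}"
    then have "X \<subseteq> {a}" by blast
    then have "card X \<le> 1" using card_mono[of "{a}" X] by simp
    then show False using X(2) by simp
  qed
  have "gV G - (X - {a}) \<noteq> {}" using b by auto
  then have "card (cut G (X - {a})) \<ge> 3" using three_edge_connectedD[OF ec _ ne] X(1) by auto
  then show False using le2 by simp
qed

lemma triangle_side_of_3cut:
  assumes wf: "wf_graph G" and cub: "cubic G" and ec: "three_edge_connected G"
    and nt: "nontrivial_3cut G X" and t: "triangle G T"
  shows "T \<subseteq> X \<or> T \<inter> X = {}"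
proof (rule ccontr)
  assume nc: "\<not> (T \<subseteq> X \<or> T \<inter> X = {})"
  have lonely: False
    if Z: "nontrivial_3cut G Z" and xyz: "x \<in> T" "y \<in> T" "z \<in> T" "x \<in> Z" "y \<notin> Z" "z \<notin> Z" "y \<noteq> z"
    for x y z Z
  proof -
    have V: "y \<in> gV G" "z \<in> gV G" using xyz(2,3) triangle_subset[OF t] by auto
    have "x \<noteq> y" "x \<noteq> z" using xyz by auto
    then have "adj G x y" "adj G x z" using triangle_adj[OF t] xyz(1-3) by auto
    then show False
      using nontrivial_3cut_two_neighbours_across[OF wf cub ec Z xyz(4) V(1) xyz(5) V(2) xyz(6,7)] by blast
  qed
  obtain x y where x: "x \<in> T" "x \<in> X" and y: "y \<in> T" "y \<notin> X" using nc by blast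
  obtain a b c where T: "T = {a, b, c}" "a \<noteq> b" "b \<noteq> c" "a \<noteq> c"
    using t unfolding triangle_def by blast
  have "x \<noteq> y" using x(2) y(2) by auto
  then have "\<exists>z\<in>T. z \<noteq> x \<and> z \<noteq> y" using T x(1) y(1) by auto
  then obtain z where z: "z \<in> T" "z \<noteq> x" "z \<noteq> y" by blast
  have V: "x \<in> gV G" "y \<in> gV G" using x(1) y(1) triangle_subset[OF t] by auto
  show False
  proof (cases "z \<in> X")
    case True
    have ntc: "nontrivial_3cut G (gV G - X)" using nontrivial_3cut_compl[OF wf nt] .
    have "y \<in> gV G - X" "x \<notin> gV G - X" "z \<notin> gV G - X" using V y(2) x(2) True by auto
    then show False using lonely[OF ntc y(1) x(1) z(1)] z(2) by blast
  next
    case False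
    show False using lonely[OF nt x(1) y(1) z(1) x(2) y(2) False] z(3) by blast
  qed
qed

lemma triangle_nontrivial_3cut:
  assumes wf: "wf_graph G" and cub: "cubic G" and ec: "three_edge_connected G"
    and t: "triangle G T" and c5: "card (gV G) \<ge> 5"
  shows "nontrivial_3cut G T"
proof -
  obtain a b c where t': "T = {a, b, c}" "a \<noteq> b" "b \<noteq> c" "a \<noteq> c"
    "a \<in> gV G" "b \<in> gV G" "c \<in> gV G" "adj G a b" "adj G b c" "adj G a c"
    using t unfolding triangle_def by blast
  have c4: "card (gV G) \<ge> 4" using c5 by simp
  obtain eab ebc eac ra rb rc where
    "eab \<in> gE G" "ends G eab = {a, b}" "ebc \<in> gE G" "ends G ebc = {b, c}"
    "eac \<in> gE G" "ends G eac = {a, c}"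
    "cut G {a, b, c} = {ra, rb, rc}" "ra \<noteq> rb" "rb \<noteq> rc" "ra \<noteq> rc"
    "incident G a = {eab, eac, ra}" "incident G b = {eab, ebc, rb}" "incident G c = {eac, ebc, rc}"
    by (rule triangle_edges[OF wf cub ec t'(5-7) t'(2-4) t'(8-10) c4])
  then have "card (cut G T) = 3" using t'(1) by simp
  moreover have "card (gV G - T) = card (gV G) - 3"
    using card_Diff_subset[OF _ triangle_subset[OF t]] triangle_card[OF t]
      finite_subset[OF triangle_subset[OF t] wf_graph_finite(1)[OF wf]] by simp
  ultimately show ?thesis unfolding nontrivial_3cut_def using triangle_subset[OF t] triangle_card[OF t] c5 by simp
qed

lemma triangle_cut_edge_unique:
  assumes wf: "wf_graph G" and cub: "cubic G" and ec: "three_edge_connected G" and t: "triangle G T" and c4: "card (gV G) \<ge> 4"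
    and w: "w \<in> T" and e: "e1 \<in> cut G T" "w \<in> ends G e1" "e2 \<in> cut G T" "w \<in> ends G e2"
  shows "e1 = e2"
proof -
  obtain a b c where t': "T = {a, b, c}" "a \<noteq> b" "b \<noteq> c" "a \<noteq> c"
    "a \<in> gV G" "b \<in> gV G" "c \<in> gV G" "adj G a b" "adj G b c" "adj G a c" using t unfolding triangle_def by blast
  obtain eab ebc eac ra rb rc where D:
    "eab \<in> gE G" "ends G eab = {a, b}" "ebc \<in> gE G" "ends G ebc = {b, c}"
    "eac \<in> gE G" "ends G eac = {a, c}"
    "cut G {a,b,c} = {ra, rb, rc}" "ra \<noteq> rb" "rb \<noteq> rc" "ra \<noteq> rc"
    "incident G a = {eab, eac, ra}" "incident G b = {eab, ebc, rb}" "incident G c = {eac, ebc, rc}"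
    using triangle_edges[OF wf cub ec t'(5-7) t'(2-4) t'(8-10) c4] by blast
  have ins: "eab \<notin> cut G T" "ebc \<notin> cut G T" "eac \<notin> cut G T"
  proof -
    have "ends G eab \<subseteq> T" "ends G ebc \<subseteq> T" "ends G eac \<subseteq> T" using D(2,4,6) t'(1) by auto
    then show "eab \<notin> cut G T" "ebc \<notin> cut G T" "eac \<notin> cut G T"
      using cut_not_subset[OF wf] by blast+
  qed
  have inEd: "e1 \<in> incident G w" "e2 \<in> incident G w" using e unfolding incident_def cut_def by auto
  show ?thesis
  proof -
    have "w = a \<or> w = b \<or> w = c" using w t'(1) by auto
    then show ?thesis
    proof (elim disjE)
      assume "w = a" then show ?thesis using inEd D(11) ins e(1,3) t'(1) by auto
    next
      assume "w = b" then show ?thesis using inEd D(12) ins e(1,3) t'(1) by auto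
    next
      assume "w = c" then show ?thesis using inEd D(13) ins e(1,3) t'(1) by auto
    qed
  qed
qed

lemma triangle_outside_neighbour:
  assumes wf: "wf_graph G" and cub: "cubic G" and ec: "three_edge_connected G"
    and t: "triangle G T" and c4: "card (gV G) \<ge> 4" and a: "a \<in> T"
    and r: "r \<in> cut G T" "ends G r = {a, b}" and v: "adj G a v" "v \<notin> T"
  shows "v = b"
proof -
  obtain e where e: "e \<in> gE G" "ends G e = {a, v}" using v(1) unfolding adj_def by blast
  have "a \<noteq> v" using a v(2) by auto
  then have "e \<in> cut G T" unfolding cut_def using e a v(2) card_doubleton_Int_eq_1 by simp
  moreover have "a \<in> ends G e" "a \<in> ends G r" using e(2) r(2) by auto
  ultimately have "e = r" using triangle_cut_edge_unique[OF wf cub ec t c4 a] r(1) by blast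
  then show ?thesis using e(2) r(2) \<open>a \<noteq> v\<close> by (auto simp: doubleton_eq_iff)
qed

lemma K4_decomposable_contract_triangle_step:
  assumes wf: "wf_graph G" and nt: "nontrivial_3cut G Z"
    and T: "T \<subseteq> gV G - Z" "card T = 3"
    and kZ: "K4_decomposable (contract G Z)" and kY: "K4_decomposable (contract G (gV G - Z))"
    and IH: "card (gV (contract G Z)) \<ge> 5 \<Longrightarrow> K4_decomposable (contract (contract G Z) T)"
  shows "K4_decomposable (contract G T)"
proof -
  note Z = nontrivial_3cutD[OF nt]
  define Y where "Y = gV G - Z"
  have fin: "finite (gV G)" using wf_graph_finite(1)[OF wf] .
  have TY: "T \<subseteq> Y" unfolding Y_def using T(1) .
  have finY: "finite Y" unfolding Y_def using fin by simp
  have Tne: "T \<noteq> {}" using T(2) by auto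
  have dj: "T \<inter> Z = {}" using T(1) by blast
  show ?thesis
  proof (cases "card Y = 3")
    case True
    then have "T = Y" using card_subset_eq[OF finY TY] T(2) by simp
    then show ?thesis using kY unfolding Y_def by simp
  next
    case False
    then have cY4: "card Y \<ge> 4" using card_mono[OF finY TY] T(2) by simp
    have "card (gV (contract G Z)) \<ge> 5" using card_contract[OF fin Z(1) Z(2)] cY4 unfolding Y_def by simp
    moreover have "contract (contract G Z) T = contract (contract G T) Z"
      using contract_comm[OF _ Z(2) Tne] T(1) by blast
    ultimately have k1: "K4_decomposable (contract (contract G T) Z)" using IH by simp
    define G' where "G' = contract G T"
    have wf': "wf_graph G'" unfolding G'_def using wf_contract[OF wf _ Tne] T(1) by blast
    have Y': "gV G' - Z = (Y - T) \<union> {rep T}" unfolding G'_def Y_def using rep_in[OF Tne] T(1) by auto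
    have "card (Y - T) = card Y - 3" using card_Diff_subset[OF finite_subset[OF TY finY] TY] T(2) by simp
    moreover have "rep T \<notin> Y - T" using rep_in[OF Tne] by blast
    ultimately have "card (gV G' - Z) \<ge> 2" unfolding Y' using cY4 finY by simp
    moreover have "Z \<subseteq> gV G'" unfolding G'_def using Z(1) T(1) by auto
    moreover have "cut G' Z = cut G Z" unfolding G'_def by (rule cut_contract_disjoint[OF dj Tne])
    ultimately have nt': "nontrivial_3cut G' Z" unfolding nontrivial_3cut_def using Z(4,6) by simp
    have "wf_graph (contract G' (gV G' - Z))"
      using wf_contract[OF wf' Diff_subset nontrivial_3cutD(3)[OF nt']] .
    moreover have "iso (contract G' ((Y - T) \<union> {rep T})) (contract G Y)"
      unfolding G'_def by (rule contract_in_stages[OF TY Tne])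
    then have "iso (contract G' (gV G' - Z)) (contract G (gV G - Z))" unfolding Y' Y_def[symmetric] .
    ultimately have k2: "K4_decomposable (contract G' (gV G' - Z))"
      using K4_decomposable_iso[OF kY] by blast
    show ?thesis using K4_decomposable.step[OF wf' nt' k1[folded G'_def] k2] unfolding G'_def .
  qed
qed

lemma K4_decomposable_contract_triangle:
  "K4_decomposable G \<Longrightarrow> cubic G \<Longrightarrow> three_edge_connected G \<Longrightarrow> card (gV G) \<ge> 5 \<Longrightarrow>
   triangle G T \<Longrightarrow> K4_decomposable (contract G T)"
proof (induction arbitrary: T rule: K4_decomposable.induct)
  case (base G)
  then show ?case using iso_K4_complete(1) by fastforce
next
  case (step G X)
  note wf = step.hyps(1) and t = step.prems(4)
  have side: "K4_decomposable (contract G T)"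
    if Z: "nontrivial_3cut G Z" "T \<inter> Z = {}"
      and kZ: "K4_decomposable (contract G Z)" and kY: "K4_decomposable (contract G (gV G - Z))"
      and IHZ: "\<And>T. cubic (contract G Z) \<Longrightarrow> three_edge_connected (contract G Z) \<Longrightarrow>
         5 \<le> card (gV (contract G Z)) \<Longrightarrow> triangle (contract G Z) T \<Longrightarrow>
         K4_decomposable (contract (contract G Z) T)" for Z
  proof -
    have "cubic (contract G Z)" using cubic_contract[OF wf step.prems(1) Z(1)] .
    moreover have "three_edge_connected (contract G Z)"
      using three_edge_connected_contract[OF wf step.prems(2)] nontrivial_3cutD[OF Z(1)] by blast
    moreover have "triangle (contract G Z) T" using triangle_contract[OF t Z(2)] .
    ultimately have "5 \<le> card (gV (contract G Z)) \<Longrightarrow> K4_decomposable (contract (contract G Z) T)"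
      using IHZ by blast
    moreover have "T \<subseteq> gV G - Z" using triangle_subset[OF t] Z(2) by auto
    ultimately show ?thesis
      using K4_decomposable_contract_triangle_step[OF wf Z(1) _ triangle_card[OF t] kZ kY] by blast
  qed
  from triangle_side_of_3cut[OF wf step.prems(1,2) step.hyps(2) t]
  show ?case
  proof
    assume "T \<subseteq> X"
    then have "T \<inter> (gV G - X) = {}" by auto
    moreover have "contract G (gV G - (gV G - X)) = contract G X"
      using nontrivial_3cutD(1)[OF step.hyps(2)] by (simp add: double_diff)
    ultimately show ?thesis
      using side[OF nontrivial_3cut_compl[OF wf step.hyps(2)] _ step.hyps(4)] step.hyps(3) step.IH(2)
      by simp
  next
    assume "T \<inter> X = {}"
    then show ?thesis using side[OF step.hyps(2) _ step.hyps(3,4)] step.IH(1) by simp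
  qed
qed

lemma triangle_outside_contracted_side:
  assumes wf: "wf_graph G" and Z: "Z \<subseteq> gV G" "Z \<noteq> {}" and k: "K4_decomposable (contract G Z)"
    and IH: "card (gV (contract G Z)) \<ge> 5 \<Longrightarrow>
      \<exists>T1 T2. triangle (contract G Z) T1 \<and> triangle (contract G Z) T2 \<and> T1 \<inter> T2 = {}"
  shows "\<exists>T. triangle G T \<and> T \<subseteq> gV G - Z"
proof -
  have fin: "finite (gV G)" using wf_graph_finite(1)[OF wf] .
  have cc: "card (gV (contract G Z)) = card (gV G - Z) + 1" using card_contract[OF fin Z] .
  have c4: "card (gV (contract G Z)) \<ge> 4" using K4_decomposable_card[OF k] .
  have wfc: "wf_graph (contract G Z)" using wf_contract[OF wf Z] .
  show ?thesis
  proof (cases "card (gV (contract G Z)) = 4")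
    case True
    have i: "iso (contract G Z) K4" using K4_decomposable_card_4[OF k True] .
    have cpl: "\<forall>u\<in>gV (contract G Z). \<forall>v\<in>gV (contract G Z). u \<noteq> v \<longrightarrow> adj (contract G Z) u v"
      using iso_K4_complete(2)[OF wfc i] .
    have "card (gV G - Z) = 3" using cc True by simp
    then obtain x y z where xyz: "gV G - Z = {x, y, z}" "x \<noteq> y" "y \<noteq> z" "x \<noteq> z"
      unfolding card_3_iff by blast
    have inV: "x \<in> gV (contract G Z)" "y \<in> gV (contract G Z)" "z \<in> gV (contract G Z)" using xyz(1)
      by (auto simp del: contract_simps simp: contract_simps(1))
    have nz: "x \<notin> Z" "y \<notin> Z" "z \<notin> Z" using xyz(1) by auto
    have a1: "adj G x y" using adj_contract_lift[OF _ nz(1,2) Z(2)] cpl inV xyz by blast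
    have a2: "adj G y z" using adj_contract_lift[OF _ nz(2,3) Z(2)] cpl inV xyz by blast
    have a3: "adj G x z" using adj_contract_lift[OF _ nz(1,3) Z(2)] cpl inV xyz by blast
    have "triangle G {x, y, z}" unfolding triangle_def using xyz a1 a2 a3 by blast
    then show ?thesis using xyz(1) by auto
  next
    case False
    then have "card (gV (contract G Z)) \<ge> 5" using c4 by simp
    then obtain T1 T2 where t: "triangle (contract G Z) T1" "triangle (contract G Z) T2" "T1 \<inter> T2 = {}"
      using IH by blast
    have "rep Z \<notin> T1 \<or> rep Z \<notin> T2" using t(3) by auto
    then show ?thesis
    proof
      assume "rep Z \<notin> T1" then show ?thesis using triangle_contract_lift[OF t(1) _ Z(2)] by blast
    next
      assume "rep Z \<notin> T2" then show ?thesis using triangle_contract_lift[OF t(2) _ Z(2)] by blast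
    qed
  qed
qed

lemma K4_decomposable_disjoint_triangles:
  "K4_decomposable G \<Longrightarrow> card (gV G) \<ge> 5 \<Longrightarrow> \<exists>T1 T2. triangle G T1 \<and> triangle G T2 \<and> T1 \<inter> T2 = {}"
proof (induction rule: K4_decomposable.induct)
  case (base G)
  then show ?case using iso_K4_complete(1) by fastforce
next
  case (step G X)
  note X = nontrivial_3cutD[OF step(2)]
  obtain T1 where T1: "triangle G T1" "T1 \<subseteq> gV G - X"
    using triangle_outside_contracted_side[OF step(1) X(1) X(2) step.hyps(3) step.IH(1)] by blast
  obtain T2 where T2: "triangle G T2" "T2 \<subseteq> gV G - (gV G - X)"
    using triangle_outside_contracted_side[OF step(1) _ X(3) step.hyps(4) step.IH(2)] by blast
  have "T1 \<inter> T2 = {}" using T1(2) T2(2) by auto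
  then show ?case using T1(1) T2(1) by blast
qed

text \<open>The part of near-bipartiteness that the proof uses. Unlike near-bipartiteness, it visibly
survives the contraction of a triangle.\<close>
definition almost_bipartite :: "('v, 'e) mgraph \<Rightarrow> bool" where
  "almost_bipartite G \<longleftrightarrow> (\<exists>F. finite F \<and> card F \<le> 2 \<and> bipartite (delete_edges G F))"

lemma near_bipartite_imp_almost_bipartite:
  assumes "near_bipartite G"
  shows "almost_bipartite G"
proof -
  obtain e1 e2 where "bipartite (delete_edges G {e1, e2})"
    using assms unfolding near_bipartite_def by blast
  then show ?thesis unfolding almost_bipartite_def by (intro exI[of _ "{e1, e2}"]) (auto simp: card_insert_if)
qed

lemma bipartite_edge_sides:
  assumes "\<forall>e\<in>gE G - F. card (ends G e \<inter> A) = 1" "e \<in> gE G" "e \<notin> F" "ends G e = {u, v}" "u \<noteq> v"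
  shows "u \<in> A \<longleftrightarrow> v \<notin> A"
proof -
  have "card (ends G e \<inter> A) = 1" using assms(1-3) by blast
  then show ?thesis using card_doubleton_Int_eq_1[OF assms(5), of A] assms(4) by simp
qed

lemma triangle_meets_deleted_edges:
  assumes "triangle G T" "bipartite (delete_edges G F)"
  shows "\<exists>e\<in>F. e \<in> gE G \<and> ends G e \<subseteq> T"
proof (rule ccontr)
  assume n: "\<not> (\<exists>e\<in>F. e \<in> gE G \<and> ends G e \<subseteq> T)"
  obtain a b c where t: "T = {a, b, c}" "a \<noteq> b" "b \<noteq> c" "a \<noteq> c"
    "adj G a b" "adj G b c" "adj G a c" using assms(1) unfolding triangle_def by blast
  obtain A where A: "\<forall>e\<in>gE G - F. card (ends G e \<inter> A) = 1"
    using assms(2) unfolding bipartite_def by auto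
  obtain e1 where e1: "e1 \<in> gE G" "ends G e1 = {a, b}" using t(5) unfolding adj_def by blast
  obtain e2 where e2: "e2 \<in> gE G" "ends G e2 = {b, c}" using t(6) unfolding adj_def by blast
  obtain e3 where e3: "e3 \<in> gE G" "ends G e3 = {a, c}" using t(7) unfolding adj_def by blast
  have nf: "e1 \<notin> F" "e2 \<notin> F" "e3 \<notin> F" using n e1 e2 e3 t(1) by auto
  have "a \<in> A \<longleftrightarrow> b \<notin> A" using bipartite_edge_sides[OF A e1(1) nf(1) e1(2) t(2)] .
  moreover have "b \<in> A \<longleftrightarrow> c \<notin> A" using bipartite_edge_sides[OF A e2(1) nf(2) e2(2) t(3)] .
  moreover have "a \<in> A \<longleftrightarrow> c \<notin> A" using bipartite_edge_sides[OF A e3(1) nf(3) e3(2) t(4)] .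
  ultimately show False by blast
qed

lemma no_three_disjoint_triangles:
  assumes wf: "wf_graph G" and ab: "almost_bipartite G"
    and t: "triangle G T1" "triangle G T2" "triangle G T3"
    and d: "T1 \<inter> T2 = {}" "T1 \<inter> T3 = {}" "T2 \<inter> T3 = {}"
  shows False
proof -
  obtain F where F: "finite F" "card F \<le> 2" "bipartite (delete_edges G F)"
    using ab unfolding almost_bipartite_def by blast
  obtain e1 where e1: "e1 \<in> F" "e1 \<in> gE G" "ends G e1 \<subseteq> T1" using triangle_meets_deleted_edges[OF t(1) F(3)] by blast
  obtain e2 where e2: "e2 \<in> F" "e2 \<in> gE G" "ends G e2 \<subseteq> T2" using triangle_meets_deleted_edges[OF t(2) F(3)] by blast
  obtain e3 where e3: "e3 \<in> F" "e3 \<in> gE G" "ends G e3 \<subseteq> T3" using triangle_meets_deleted_edges[OF t(3) F(3)] by blast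
  have ne: "ends G e \<noteq> {}" if "e \<in> gE G" for e using wf_graph_edgeD(2)[OF wf that] by (intro notI) simp
  have "e1 \<noteq> e2" using e1 e2 d(1) ne[OF e1(2)] by blast
  moreover have "e1 \<noteq> e3" using e1 e3 d(2) ne[OF e1(2)] by blast
  moreover have "e2 \<noteq> e3" using e2 e3 d(3) ne[OF e2(2)] by blast
  ultimately have "card {e1, e2, e3} = 3" by simp
  moreover have "card {e1, e2, e3} \<le> card F" using e1 e2 e3 F(1) by (intro card_mono) auto
  ultimately show False using F(2) by simp
qed

lemma bipartite_contract_triangle_core:
  assumes wf: "wf_graph G" and T: "T = {a, b, c}" "T \<subseteq> gV G"
    and A: "A \<subseteq> gV G" "\<forall>e\<in>gE G - F. card (ends G e \<inter> A) = 1"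
    and ab: "a \<in> A \<longleftrightarrow> b \<in> A"
    and rc: "\<forall>e\<in>cut G T. c \<in> ends G e \<longrightarrow> e = r"
    and e0: "e0 \<in> F" "ends G e0 \<subseteq> T"
    and F: "finite F" "card F \<le> 2"
  shows "almost_bipartite (contract G T)"
proof -
  have Tne: "T \<noteq> {}" using T(1) by simp
  have rT: "rep T \<in> T" using rep_in[OF Tne] .
  define A' where "A' = (A - T) \<union> (if a \<in> A then {rep T} else {})"
  define F' where "F' = (F - {e0}) \<union> {r}"
  have fF': "finite F'" unfolding F'_def using F(1) by simp
  have "card F' \<le> card (F - {e0}) + 1" unfolding F'_def using card_Un_le[of "F - {e0}" "{r}"] by simp
  moreover have "card (F - {e0}) = card F - 1" using e0(1) F(1) by simp
  ultimately have cF': "card F' \<le> 2" using F(2) e0(1) F(1) by (cases "card F") auto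
  have A'V: "A' \<subseteq> gV (contract G T)" unfolding A'_def using A(1) by auto
  have memA: "contract_vertex T w \<in> A' \<longleftrightarrow> (if w \<in> T then a \<in> A else w \<in> A)" for w
    unfolding A'_def using rT by auto
  have edges: "card (ends (contract G T) e \<inter> A') = 1" if e: "e \<in> gE (contract G T) - F'" for e
  proof -
    have eE: "e \<in> gE G" and nT: "\<not> ends G e \<subseteq> T" and nF': "e \<notin> F'" using e by auto
    have ne0: "e \<noteq> e0" using nT e0(2) by auto
    have nF: "e \<notin> F" using nF' ne0 unfolding F'_def by auto
    have nr: "e \<noteq> r" using nF' unfolding F'_def by auto
    obtain p q where pq: "p \<noteq> q" "ends G e = {p, q}" using wf_graph_edgeD(4)[OF wf eE] by blast
    have bp: "p \<in> A \<longleftrightarrow> q \<notin> A" using bipartite_edge_sides[OF A(2) eE nF pq(2) pq(1)] .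
    have img: "ends (contract G T) e = {contract_vertex T p, contract_vertex T q}" using pq(2) by simp
    have nboth: "\<not> (p \<in> T \<and> q \<in> T)" using nT pq(2) by auto
    have ne: "contract_vertex T p \<noteq> contract_vertex T q" using nboth pq(1) rT by (auto split: if_splits)
    have key: "contract_vertex T p \<in> A' \<longleftrightarrow> contract_vertex T q \<notin> A'"
    proof (cases "p \<in> T")
      case True
      then have qT: "q \<notin> T" using nboth by auto
      have "e \<in> cut G T" unfolding cut_def using eE card_doubleton_Int_eq_1[OF pq(1), of T] pq(2) True qT by simp
      then have "p \<noteq> c" using rc nr pq(2) by auto
      then have "p \<in> A \<longleftrightarrow> a \<in> A" using True T(1) ab by auto
      then show ?thesis using memA[of p] memA[of q] True qT bp by simp
    next
      case False
      show ?thesis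
      proof (cases "q \<in> T")
        case True
        have "e \<in> cut G T" unfolding cut_def using eE card_doubleton_Int_eq_1[OF pq(1), of T] pq(2) True False by simp
        then have "q \<noteq> c" using rc nr pq(2) by auto
        then have "q \<in> A \<longleftrightarrow> a \<in> A" using True T(1) ab by auto
        then show ?thesis using memA[of p] memA[of q] True False bp by simp
      next
        case F2: False
        then show ?thesis using memA[of p] memA[of q] False bp by simp
      qed
    qed
    show ?thesis using card_doubleton_Int_eq_1[OF ne, of A'] img key by simp
  qed
  have "bipartite (delete_edges (contract G T) F')"
    unfolding bipartite_def using A'V edges by auto
  then show ?thesis unfolding almost_bipartite_def using fF' cF' by blast
qed

lemma almost_bipartite_contract_triangle:
  assumes wf: "wf_graph G" and cub: "cubic G" and ec: "three_edge_connected G"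
    and t: "triangle G T" and c4: "card (gV G) \<ge> 4" and ab: "almost_bipartite G"
  shows "almost_bipartite (contract G T)"
proof -
  obtain a b c where t': "T = {a, b, c}" and d: "a \<noteq> b" "b \<noteq> c" "a \<noteq> c"
    and V: "a \<in> gV G" "b \<in> gV G" "c \<in> gV G" and ad: "adj G a b" "adj G b c" "adj G a c"
    using t unfolding triangle_def by blast
  obtain F where F: "finite F" "card F \<le> 2" "bipartite (delete_edges G F)"
    using ab unfolding almost_bipartite_def by blast
  obtain A where A: "A \<subseteq> gV G" "\<forall>e\<in>gE G - F. card (ends G e \<inter> A) = 1"
    using F(3) unfolding bipartite_def by auto
  obtain e0 where e0: "e0 \<in> F" "e0 \<in> gE G" "ends G e0 \<subseteq> T"
    using triangle_meets_deleted_edges[OF t F(3)] by blast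
  obtain eab ebc eac ra rb rc where
    "eab \<in> gE G" "ends G eab = {a, b}" "ebc \<in> gE G" "ends G ebc = {b, c}"
    "eac \<in> gE G" "ends G eac = {a, c}"
    "cut G {a, b, c} = {ra, rb, rc}" "ra \<noteq> rb" "rb \<noteq> rc" "ra \<noteq> rc"
    and I: "incident G a = {eab, eac, ra}" "incident G b = {eab, ebc, rb}" "incident G c = {eac, ebc, rc}"
    by (rule triangle_edges[OF wf cub ec V d ad c4])
  then have r: "ra \<in> cut G T" "rb \<in> cut G T" "rc \<in> cut G T"
    "a \<in> ends G ra" "b \<in> ends G rb" "c \<in> ends G rc" using t'(1) unfolding incident_def by auto
  have uq: "\<forall>e\<in>cut G T. x \<in> ends G e \<longrightarrow> e = r" if "x \<in> T" "r \<in> cut G T" "x \<in> ends G r" for x r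
    using triangle_cut_edge_unique[OF wf cub ec t c4 that(1) _ _ that(2,3)] by blast
  have TV: "T \<subseteq> gV G" using triangle_subset[OF t] .
  have "(a \<in> A \<longleftrightarrow> b \<in> A) \<or> (a \<in> A \<longleftrightarrow> c \<in> A) \<or> (b \<in> A \<longleftrightarrow> c \<in> A)" by blast
  then show ?thesis
  proof (elim disjE)
    assume "a \<in> A \<longleftrightarrow> b \<in> A"
    then show ?thesis
      using bipartite_contract_triangle_core[OF wf t' TV A _ uq[OF _ r(3,6)] e0(1,3) F(1,2)] t'(1) by simp
  next
    assume "a \<in> A \<longleftrightarrow> c \<in> A"
    moreover have "T = {a, c, b}" using t'(1) by auto
    ultimately show ?thesis
      using bipartite_contract_triangle_core[OF wf _ TV A _ uq[OF _ r(2,5)] e0(1,3) F(1,2)] by simp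
  next
    assume "b \<in> A \<longleftrightarrow> c \<in> A"
    moreover have "T = {b, c, a}" using t'(1) by auto
    ultimately show ?thesis
      using bipartite_contract_triangle_core[OF wf _ TV A _ uq[OF _ r(1,4)] e0(1,3) F(1,2)] by simp
  qed
qed

lemma contract_vertex_in_triangle:
  assumes wf: "wf_graph G" and ab: "almost_bipartite G" and t: "triangle G T"
    and k: "K4_decomposable (contract G T)" and c5: "card (gV (contract G T)) \<ge> 5"
  shows "in_triangle (contract G T) (rep T)"
proof (rule ccontr)
  assume n: "\<not> in_triangle (contract G T) (rep T)"
  obtain S1 S2 where S: "triangle (contract G T) S1" "triangle (contract G T) S2" "S1 \<inter> S2 = {}"
    using K4_decomposable_disjoint_triangles[OF k c5] by blast
  have Tne: "T \<noteq> {}" using triangle_card[OF t] by auto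
  have "rep T \<notin> S1" "rep T \<notin> S2" using triangle_in_triangle[OF S(1)] triangle_in_triangle[OF S(2)] n by blast+
  then have "triangle G S1" "S1 \<subseteq> gV G - T" "triangle G S2" "S2 \<subseteq> gV G - T"
    using triangle_contract_lift[OF S(1) _ Tne] triangle_contract_lift[OF S(2) _ Tne] by auto
  moreover from this have "T \<inter> S1 = {}" "T \<inter> S2 = {}" by auto
  ultimately show False using no_three_disjoint_triangles[OF wf ab t _ _ _ _ S(3)] by blast
qed

section \<open>Bricks are 3-edge-connected\<close>

lemma card_cut_shore_ends:
  assumes wf: "wf_graph G"
  shows "card {w \<in> gV G - Y. \<exists>e\<in>cut G Y. w \<in> ends G e} \<le> card (cut G Y)"
proof -
  have fc: "finite (cut G Y)" using wf_graph_finite(2)[OF wf] unfolding cut_def by auto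
  have one: "card (ends G e - Y) = 1" if e: "e \<in> cut G Y" for e
  proof -
    have eE: "e \<in> gE G" and c1: "card (ends G e \<inter> Y) = 1" using e unfolding cut_def by auto
    have f2: "finite (ends G e)" "card (ends G e) = 2" using wf_graph_edgeD[OF wf eE] by auto
    have "ends G e - Y = ends G e - (ends G e \<inter> Y)" by auto
    then show ?thesis using card_Diff_subset[of "ends G e \<inter> Y" "ends G e"] f2 c1 by simp
  qed
  have "card (\<Union>e\<in>cut G Y. ends G e - Y) \<le> (\<Sum>e\<in>cut G Y. card (ends G e - Y))"
    by (rule card_UN_le[OF fc])
  also have "\<dots> = card (cut G Y)" using one by simp
  finally have cU: "card (\<Union>e\<in>cut G Y. ends G e - Y) \<le> card (cut G Y)" .
  have fU: "finite (\<Union>e\<in>cut G Y. ends G e - Y)"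
    using fc one by (intro finite_UN_I) (auto intro: card_ge_0_finite)
  have "{w \<in> gV G - Y. \<exists>e\<in>cut G Y. w \<in> ends G e} \<subseteq> (\<Union>e\<in>cut G Y. ends G e - Y)" by auto
  then show ?thesis using card_mono[OF fU] cU by (meson le_trans)
qed

lemma three_connected_small_cut:
  assumes wf: "wf_graph G" and kc: "k_connected 3 G"
    and Y: "Y \<subseteq> gV G" "Y \<noteq> {}" "card (gV G - Y) \<ge> 3" and c2: "card (cut G Y) \<le> 2"
  shows False
proof -
  define S where "S = {w \<in> gV G - Y. \<exists>e\<in>cut G Y. w \<in> ends G e}"
  have fin: "finite (gV G)" using wf_graph_finite(1)[OF wf] .
  have cS: "card S \<le> 2" using card_cut_shore_ends[OF wf, of Y] c2 unfolding S_def by simp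
  have SV: "S \<subseteq> gV G" unfolding S_def by auto
  have con: "connected (delete_verts G S)" using kc SV cS unfolding k_connected_def by auto
  obtain y where y: "y \<in> Y" using Y(2) by blast
  have "card (gV G - Y - S) > 0"
  proof -
    have "gV G - Y \<subseteq> (gV G - Y - S) \<union> S" by blast
    then have "card (gV G - Y) \<le> card ((gV G - Y - S) \<union> S)"
      using fin SV by (intro card_mono) (auto intro: finite_subset)
    also have "\<dots> \<le> card (gV G - Y - S) + card S" by (rule card_Un_le)
    finally have "card (gV G - Y) \<le> card (gV G - Y - S) + card S" .
    then show ?thesis using Y(3) cS by simp
  qed
  then obtain w where w: "w \<in> gV G - Y - S" by (metis card_gt_0_iff ex_in_conv)
  have yV: "y \<in> gV (delete_verts G S)" using y Y(1) unfolding S_def by auto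
  have wV: "w \<in> gV (delete_verts G S)" using w by auto
  have path: "(adj (delete_verts G S))\<^sup>*\<^sup>* y w" using con yV wV unfolding connected_def by blast
  have "z \<in> Y" if "(adj (delete_verts G S))\<^sup>*\<^sup>* y z" for z
    using that
  proof (induction rule: rtranclp_induct)
    case base then show ?case using y .
  next
    case (step z z')
    obtain e where e: "e \<in> gE G" "ends G e \<inter> S = {}" "ends G e = {z, z'}"
      using step(2) unfolding adj_def by auto
    show ?case
    proof (rule ccontr)
      assume nz: "z' \<notin> Y"
      have zz: "z \<noteq> z'" using step(3) nz by auto
      have z'V: "z' \<in> gV G" using wf_graph_edgeD(1)[OF wf e(1)] e(3) by auto
      have "e \<in> cut G Y" unfolding cut_def using e(1) e(3) card_doubleton_Int_eq_1[OF zz, of Y] step(3) nz by simp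
      then have "z' \<in> S" unfolding S_def using z'V nz e(3) by auto
      then show False using e(2,3) by auto
    qed
  qed
  then have "w \<in> Y" using path by blast
  then show False using w by auto
qed

lemma three_connected_imp_three_edge_connected:
  assumes wf: "wf_graph G" and kc: "k_connected 3 G" and c6: "card (gV G) \<ge> 6"
  shows "three_edge_connected G"
  unfolding three_edge_connected_def
proof (intro allI impI)
  fix Y assume Y: "Y \<subseteq> gV G" "Y \<noteq> {}" "gV G - Y \<noteq> {}"
  have fin: "finite (gV G)" using wf_graph_finite(1)[OF wf] .
  show "card (cut G Y) \<ge> 3"
  proof (rule ccontr)
    assume "\<not> card (cut G Y) \<ge> 3"
    then have c2: "card (cut G Y) \<le> 2" by simp
    have cs: "card (gV G) = card Y + card (gV G - Y)"
      using card_Diff_subset[OF finite_subset[OF Y(1) fin] Y(1)] card_mono[OF fin Y(1)] by simp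
    show False
    proof (cases "card (gV G - Y) \<ge> 3")
      case True show False using three_connected_small_cut[OF wf kc Y(1,2) True c2] .
    next
      case False
      then have cY: "card (gV G - (gV G - Y)) \<ge> 3" using cs c6 Y(1) by (simp add: double_diff)
      have "cut G (gV G - Y) = cut G Y" using cut_compl[OF wf Y(1)] .
      then show False using three_connected_small_cut[OF wf kc _ Y(3) cY] c2 by simp
    qed
  qed
qed
section \<open>Six vertices: the prism\<close>

lemma disjoint_triangles_matching:
  assumes wf: "wf_graph G" and cub: "cubic G" and ec: "three_edge_connected G" and c6: "card (gV G) = 6"
    and t1: "triangle G T1" and t2: "triangle G T2" and dj: "T1 \<inter> T2 = {}"
  obtains a1 a2 a3 b1 b2 b3 where "gV G = {a1, a2, a3, b1, b2, b3}"
    "T1 = {a1, a2, a3}" "T2 = {b1, b2, b3}"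
    "adj G a1 b1" "adj G a2 b2" "adj G a3 b3"
    "\<not> adj G a1 b2" "\<not> adj G a1 b3" "\<not> adj G a2 b1" "\<not> adj G a2 b3" "\<not> adj G a3 b1" "\<not> adj G a3 b2"
proof -
  have c4: "card (gV G) \<ge> 4" using c6 by simp
  have fin: "finite (gV G)" using wf_graph_finite(1)[OF wf] .
  obtain a1 a2 a3 where t: "T1 = {a1, a2, a3}" "a1 \<noteq> a2" "a2 \<noteq> a3" "a1 \<noteq> a3"
    "a1 \<in> gV G" "a2 \<in> gV G" "a3 \<in> gV G" "adj G a1 a2" "adj G a2 a3" "adj G a1 a3"
    using t1 unfolding triangle_def by blast
  obtain e12 e23 e13 r1 r2 r3 where D:
    "e12 \<in> gE G" "ends G e12 = {a1, a2}" "e23 \<in> gE G" "ends G e23 = {a2, a3}"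
    "e13 \<in> gE G" "ends G e13 = {a1, a3}"
    "cut G T1 = {r1, r2, r3}" "r1 \<noteq> r2" "r2 \<noteq> r3" "r1 \<noteq> r3"
    "incident G a1 = {e12, e13, r1}" "incident G a2 = {e12, e23, r2}" "incident G a3 = {e13, e23, r3}"
    using triangle_edges[OF wf cub ec t(5-7) t(2-4) t(8-10) c4] t(1) by blast
  have T1V: "T1 \<subseteq> gV G" and T2V: "T2 \<subseteq> gV G" using triangle_subset t1 t2 by auto
  have cT: "card T1 = 3" "card T2 = 3" using triangle_card t1 t2 by auto
  have fT: "finite T1" "finite T2" using T1V T2V fin finite_subset by auto
  have "card (T1 \<union> T2) = 6" using card_Un_disjoint[OF fT dj] cT by simp
  then have VU: "gV G = T1 \<union> T2" using card_subset_eq[OF fin, of "T1 \<union> T2"] T1V T2V c6 by simp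
  have T2c: "T2 = gV G - T1" using VU dj by auto
  have cut12: "cut G T2 = cut G T1" using cut_compl[OF wf T1V] T2c by simp
  have rc: "r1 \<in> cut G T1" "r2 \<in> cut G T1" "r3 \<in> cut G T1" using D(7) by auto
  have ra: "a1 \<in> ends G r1" "a2 \<in> ends G r2" "a3 \<in> ends G r3" using D(11-13) unfolding incident_def by auto
  have aT: "a1 \<in> T1" "a2 \<in> T1" "a3 \<in> T1" using t(1) by auto
  obtain b1 where b1: "ends G r1 = {a1, b1}" "b1 \<in> gV G - T1" using cut_edge_other_end[OF wf rc(1) aT(1) ra(1)] by blast
  obtain b2 where b2: "ends G r2 = {a2, b2}" "b2 \<in> gV G - T1" using cut_edge_other_end[OF wf rc(2) aT(2) ra(2)] by blast
  obtain b3 where b3: "ends G r3 = {a3, b3}" "b3 \<in> gV G - T1" using cut_edge_other_end[OF wf rc(3) aT(3) ra(3)] by blast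
  have bT: "b1 \<in> T2" "b2 \<in> T2" "b3 \<in> T2" using b1 b2 b3 T2c by auto
  have uc: "e1 = e2" if "w \<in> T2" "e1 \<in> cut G T2" "w \<in> ends G e1" "e2 \<in> cut G T2" "w \<in> ends G e2" for w e1 e2
    using triangle_cut_edge_unique[OF wf cub ec t2 c4 that] .
  have rc2: "r1 \<in> cut G T2" "r2 \<in> cut G T2" "r3 \<in> cut G T2" using rc cut12 by auto
  have rb: "b1 \<in> ends G r1" "b2 \<in> ends G r2" "b3 \<in> ends G r3" using b1 b2 b3 by auto
  have db: "b1 \<noteq> b2" "b2 \<noteq> b3" "b1 \<noteq> b3"
  proof -
    show "b1 \<noteq> b2" using uc[OF bT(1) rc2(1) rb(1) rc2(2)] rb(2) D(8) by blast
    show "b2 \<noteq> b3" using uc[OF bT(2) rc2(2) rb(2) rc2(3)] rb(3) D(9) by blast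
    show "b1 \<noteq> b3" using uc[OF bT(1) rc2(1) rb(1) rc2(3)] rb(3) D(10) by blast
  qed
  have T2e: "T2 = {b1, b2, b3}"
  proof -
    have "{b1, b2, b3} \<subseteq> T2" using bT by auto
    moreover have "card {b1, b2, b3} = 3" using db by simp
    ultimately show ?thesis using card_subset_eq[OF fT(2)] cT(2) by metis
  qed
  have pr: "adj G a1 b1" "adj G a2 b2" "adj G a3 b3" unfolding adj_def using D(7) b1 b2 b3 rc
    unfolding cut_def by auto
  have na: "\<not> adj G a v" if "a \<in> T1" "r \<in> cut G T1" "ends G r = {a, b}" "v \<in> T2" "v \<noteq> b" for a r b v
    using triangle_outside_neighbour[OF wf cub ec t1 c4 that(1-3)] that(4,5) dj by blast
  show ?thesis
  proof (rule that)
    show "gV G = {a1, a2, a3, b1, b2, b3}" using VU t(1) T2e by auto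
    show "\<not> adj G a1 b2" "\<not> adj G a1 b3" "\<not> adj G a2 b1" "\<not> adj G a2 b3" "\<not> adj G a3 b1" "\<not> adj G a3 b2"
      using na[OF aT(1) rc(1) b1(1)] na[OF aT(2) rc(2) b2(1)] na[OF aT(3) rc(3) b3(1)] bT db by auto
  qed (use t(1) T2e pr in auto)
qed

lemma iso_C6bar_two_disjoint_triangles:
  assumes wf: "wf_graph G" and cub: "cubic G" and ec: "three_edge_connected G" and c6: "card (gV G) = 6"
    and t1: "triangle G T1" and t2: "triangle G T2" and dj: "T1 \<inter> T2 = {}"
  shows "iso G C6bar"
proof -
  obtain a1 a2 a3 b1 b2 b3 where V6: "gV G = {a1, a2, a3, b1, b2, b3}"
    and T: "T1 = {a1, a2, a3}" "T2 = {b1, b2, b3}"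
    and pr: "adj G a1 b1" "adj G a2 b2" "adj G a3 b3"
    and na: "\<not> adj G a1 b2" "\<not> adj G a1 b3" "\<not> adj G a2 b1" "\<not> adj G a2 b3" "\<not> adj G a3 b1" "\<not> adj G a3 b2"
    by (rule disjoint_triangles_matching[OF assms])
  have "card {a1, a2, a3} = 3" "card {b1, b2, b3} = 3" using triangle_card t1 t2 T by auto
  then have da: "a1 \<noteq> a2" "a2 \<noteq> a3" "a1 \<noteq> a3" and db: "b1 \<noteq> b2" "b2 \<noteq> b3" "b1 \<noteq> b3"
    by (auto simp: card_insert_if split: if_splits)
  have dab: "a1 \<noteq> b1" "a1 \<noteq> b2" "a1 \<noteq> b3" "a2 \<noteq> b1" "a2 \<noteq> b2" "a2 \<noteq> b3"
     "a3 \<noteq> b1" "a3 \<noteq> b2" "a3 \<noteq> b3" using dj T by auto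
  have pa: "adj G a1 a2" "adj G a2 a3" "adj G a1 a3" using triangle_adj[OF t1] T(1) da by auto
  have pb: "adj G b1 b2" "adj G b2 b3" "adj G b1 b3" using triangle_adj[OF t2] T(2) db by auto
  have ns: "\<not> adj G u u" for u using adj_irrefl[OF wf] .
  define f where "f = (\<lambda>x. if x = a1 then 0 else if x = a2 then 2 else if x = a3 then 4
     else if x = b1 then 3 else if x = b2 then (5::nat) else 1)"
  have fv: "f a1 = 0" "f a2 = 2" "f a3 = 4" "f b1 = 3" "f b2 = 5" "f b3 = 1"
    unfolding f_def using da db dab by auto
  have bf: "bij_betw f (gV G) (gV C6bar)"
    unfolding bij_betw_def V6 C6bar_V
  proof
    show "inj_on f {a1, a2, a3, b1, b2, b3}" unfolding inj_on_def using fv by auto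
    show "f ` {a1, a2, a3, b1, b2, b3} = {0..<6}" using fv by (auto simp: less6)
  qed
  have sym: "adj G v u \<longleftrightarrow> adj G u v" for u v using adj_sym by metis
  have ad: "\<forall>u\<in>gV G. \<forall>v\<in>gV G. adj C6bar (f u) (f v) \<longleftrightarrow> adj G u v"
    unfolding V6 using fv pa pb pr na ns
    by (simp add: C6bar_adj C6bar_E sym)
  have "2 * card (gE G) = 18" using cubic_card_edges[OF wf cub] c6 by simp
  then have "card (gE G) = card (gE C6bar)" using card_C6bar_edges by simp
  then obtain g where "isom G C6bar f g" using isom_of_adj_bij[OF wf wf_C6bar bf ad C6bar_simple] by blast
  then show ?thesis using iso_isom by blast
qed

lemma nontrivial_3cut_K4_shore:
  assumes wf: "wf_graph G" and X: "X \<subseteq> gV G" "X \<noteq> {}" "gV G - X \<noteq> {}"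
    and cX: "card (gV (contract G X)) \<ge> 4" and K: "iso (contract G (gV G - X)) K4"
  shows "nontrivial_3cut G X"
proof -
  define Y where "Y = gV G - X"
  have fin: "finite (gV G)" using wf_graph_finite(1)[OF wf] .
  have "card (gV G - X) \<ge> 3" using cX card_contract[OF fin X(1,2)] by simp
  obtain f g where im: "isom (contract G Y) K4 f g" using K unfolding Y_def iso_isom by blast
  have "card (gV (contract G Y)) = 4" using isom_card[OF im] card_K4 by simp
  then have "card X = 3" using card_contract[OF fin _ X(3)] X(1) unfolding Y_def by (simp add: double_diff)
  have wfY: "wf_graph (contract G Y)" unfolding Y_def using wf_contract[OF wf _ X(3)] by blast
  have rY: "rep Y \<in> gV (contract G Y)" by simp
  then have "f (rep Y) \<in> gV K4" using im unfolding isom_def by (metis bij_betwE)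
  then have "degree (contract G Y) (rep Y) = 3" using isom_degree[OF wfY im rY] K4_degree by simp
  then have "card (cut G X) = 3"
    using degree_contract_rep[OF wf X(3)] cut_compl[OF wf X(1)] unfolding Y_def by simp
  then show ?thesis unfolding nontrivial_3cut_def using X(1) \<open>card X = 3\<close> \<open>card (gV G - X) \<ge> 3\<close> by simp
qed

lemma tri_ladder_imp_K4_decomposable: "tri_ladder G \<Longrightarrow> wf_graph G \<Longrightarrow> K4_decomposable G"
proof (induction rule: tri_ladder.induct)
  case (base G)
  then show ?case using K4_decomposable_iso[OF K4_decomposable_C6bar] by blast
next
  case (step H u v G)
  obtain X where X: "X \<subseteq> gV G" "X \<noteq> {}" "gV G - X \<noteq> {}"
    and H: "iso_at (contract G X) (rep X) H u"
    and K: "iso_at (contract G (gV G - X)) (rep (gV G - X)) K4 v"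
    using step.hyps(5) unfolding splicing_def by blast
  have wfX: "wf_graph (contract G X)" using wf_contract[OF step.prems X(1,2)] .
  have wfY: "wf_graph (contract G (gV G - X))" using wf_contract[OF step.prems _ X(3)] by blast
  obtain f g where im: "isom (contract G X) H f g" using H unfolding iso_at_isom by blast
  have kH: "K4_decomposable H" using step.IH isom_wf[OF wfX im] by blast
  have kX: "K4_decomposable (contract G X)"
    using K4_decomposable_iso[OF kH wfX] im iso_isom by blast
  have kY: "K4_decomposable (contract G (gV G - X))"
    using K4_decomposable.base[OF wfY iso_at_imp_iso[OF K]] .
  have "nontrivial_3cut G X"
    using nontrivial_3cut_K4_shore[OF step.prems X K4_decomposable_card[OF kX] iso_at_imp_iso[OF K]] .
  then show ?case using K4_decomposable.step[OF step.prems _ kX kY] by blast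
qed

lemma triangle_complement_contract_K4:
  assumes wf: "wf_graph G" and cub: "cubic G" and ec: "three_edge_connected G"
    and t: "triangle G T" and c5: "card (gV G) \<ge> 5"
  shows "iso_at (contract G (gV G - T)) (rep (gV G - T)) K4 3"
proof -
  obtain a b c where t': "T = {a, b, c}" and d: "a \<noteq> b" "b \<noteq> c" "a \<noteq> c"
    and V: "a \<in> gV G" "b \<in> gV G" "c \<in> gV G" and ad: "adj G a b" "adj G b c" "adj G a c"
    using t unfolding triangle_def by blast
  define Y where "Y = gV G - T"
  define H where "H = contract G Y"
  have ntY: "nontrivial_3cut G Y"
    unfolding Y_def using nontrivial_3cut_compl[OF wf triangle_nontrivial_3cut[OF wf cub ec t c5]] .
  have wfH: "wf_graph H" unfolding H_def using wf_contract[OF wf] nontrivial_3cutD[OF ntY] by blast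
  have TV: "T \<subseteq> gV G" using triangle_subset[OF t] .
  have rYT: "rep Y \<notin> T" using rep_in[OF nontrivial_3cutD(2)[OF ntY]] unfolding Y_def by blast
  have VH: "gV H = {a, b, c, rep Y}" unfolding H_def Y_def using TV t'(1) by auto
  have radj: "adj H x (rep Y)" if x: "x \<in> T" "r \<in> cut G T" "x \<in> ends G r" for x r
  proof -
    obtain y where y: "ends G r = {x, y}" "y \<in> gV G - T" using cut_edge_other_end[OF wf x(2,1,3)] by blast
    have "r \<in> gE G" using x(2) unfolding cut_def by auto
    moreover have "x \<notin> Y" "y \<in> Y" using x(1) y(2) unfolding Y_def by auto
    ultimately show ?thesis unfolding adj_def H_def using y(1) by (intro bexI[of _ r]) auto
  qed
  obtain eab ebc eac ra rb rc where
    "eab \<in> gE G" "ends G eab = {a, b}" "ebc \<in> gE G" "ends G ebc = {b, c}"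
    "eac \<in> gE G" "ends G eac = {a, c}"
    "cut G {a, b, c} = {ra, rb, rc}" "ra \<noteq> rb" "rb \<noteq> rc" "ra \<noteq> rc"
    "incident G a = {eab, eac, ra}" "incident G b = {eab, ebc, rb}" "incident G c = {eac, ebc, rc}"
    by (rule triangle_edges[OF wf cub ec V d ad]) (use c5 in simp)
  then have r: "ra \<in> cut G T" "rb \<in> cut G T" "rc \<in> cut G T"
    "a \<in> ends G ra" "b \<in> ends G rb" "c \<in> ends G rc" using t'(1) unfolding incident_def by auto
  have nY: "a \<notin> Y" "b \<notin> Y" "c \<notin> Y" unfolding Y_def using t'(1) by auto
  have "adj H a (rep Y)" "adj H b (rep Y)" "adj H c (rep Y)"
    using radj[OF _ r(1,4)] radj[OF _ r(2,5)] radj[OF _ r(3,6)] t'(1) by auto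
  moreover have "adj H a b" "adj H b c" "adj H a c"
    unfolding H_def using adj_contract[OF ad(1)] adj_contract[OF ad(2)] adj_contract[OF ad(3)] nY by blast+
  ultimately have cpl: "\<forall>u\<in>gV H. \<forall>v\<in>gV H. u \<noteq> v \<longrightarrow> adj H u v"
    unfolding VH using adj_sym by (metis empty_iff insert_iff)
  have cubH: "cubic H" unfolding H_def using cubic_contract[OF wf cub ntY] .
  have "card (gV H) = 4" unfolding VH using d rYT t'(1) by auto
  then have "card (gE H) = 6" using cubic_card_edges[OF wfH cubH] by simp
  then have "iso_at H (rep Y) K4 3"
    using iso_at_K4_complete[OF wfH VH _ _ _ _ _ _ cpl] d rYT t'(1) by auto
  then show ?thesis unfolding H_def Y_def .
qed

lemma splicing_contract_triangle:
  assumes wf: "wf_graph G" and cub: "cubic G" and ec: "three_edge_connected G"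
    and t: "triangle G T" and c5: "card (gV G) \<ge> 5"
  shows "splicing G (contract G T) (rep T) K4 3"
proof -
  have nt: "nontrivial_3cut G T" using triangle_nontrivial_3cut[OF wf cub ec t c5] .
  have "iso_at (contract G T) (rep T) (contract G T) (rep T)"
    unfolding iso_at_isom using isom_refl by fastforce
  then show ?thesis unfolding splicing_def
    using nontrivial_3cutD[OF nt] triangle_complement_contract_K4[OF assms] by blast
qed

lemma K4_decomposable_imp_tri_ladder:
  "wf_graph G \<Longrightarrow> cubic G \<Longrightarrow> three_edge_connected G \<Longrightarrow> almost_bipartite G \<Longrightarrow>
   K4_decomposable G \<Longrightarrow> card (gV G) \<ge> 5 \<Longrightarrow> tri_ladder G"
proof (induction "card (gV G)" arbitrary: G rule: less_induct)
  case less
  note wf = less.prems(1) and cub = less.prems(2) and ec = less.prems(3) and ab = less.prems(4)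
    and k = less.prems(5) and c5 = less.prems(6)
  obtain T1 T2 where T: "triangle G T1" "triangle G T2" "T1 \<inter> T2 = {}"
    using K4_decomposable_disjoint_triangles[OF k c5] by blast
  define G' where "G' = contract G T1"
  have nt: "nontrivial_3cut G T1" using triangle_nontrivial_3cut[OF wf cub ec T(1) c5] .
  have k': "K4_decomposable G'" unfolding G'_def using K4_decomposable_contract_triangle[OF k cub ec c5 T(1)] .
  have "card (gV G') = card (gV G - T1) + 1"
    unfolding G'_def using card_contract[OF wf_graph_finite(1)[OF wf]] nontrivial_3cutD[OF nt] by blast
  moreover have "card (gV G - T1) = card (gV G) - 3"
    using card_Diff_subset[OF _ nontrivial_3cutD(1)[OF nt]] triangle_card[OF T(1)]
      finite_subset[OF nontrivial_3cutD(1)[OF nt] wf_graph_finite(1)[OF wf]] by simp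
  ultimately have cG': "card (gV G') = card (gV G) - 2" using c5 by simp
  show ?case
  proof (cases "card (gV G) = 6")
    case True
    show ?thesis using tri_ladder.base[OF iso_C6bar_two_disjoint_triangles[OF wf cub ec True T]] .
  next
    case False
    then have c5': "card (gV G') \<ge> 5" using cG' K4_decomposable_card[OF k'] by simp
    have "card (gV G') < card (gV G)" using cG' c5 by simp
    moreover have "wf_graph G'" unfolding G'_def using wf_graph_contract_nontrivial_3cut(1)[OF wf nt] .
    moreover have "cubic G'" unfolding G'_def using cubic_contract[OF wf cub nt] .
    moreover have "three_edge_connected G'"
      unfolding G'_def using three_edge_connected_contract[OF wf ec] nontrivial_3cutD[OF nt] by blast
    moreover have "almost_bipartite G'"
      unfolding G'_def using almost_bipartite_contract_triangle[OF wf cub ec T(1) _ ab] c5 by simp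
    ultimately have "tri_ladder G'" using less.hyps k' c5' by blast
    moreover have "in_triangle G' (rep T1)"
      unfolding G'_def using contract_vertex_in_triangle[OF wf ab T(1) k'[unfolded G'_def]] c5' by (simp add: G'_def)
    moreover have "rep T1 \<in> gV G'" unfolding G'_def by simp
    moreover have "splicing G G' (rep T1) K4 3"
      unfolding G'_def by (rule splicing_contract_triangle[OF wf cub ec T(1) c5])
    ultimately show ?thesis using tri_ladder.step[of G' "rep T1" 3 G] by (simp add: K4_V)
  qed
qed

theorem mainTheorem14:
  fixes G :: "('v, 'e) mgraph"
  assumes "wf_graph G"
    and "cubic G"
    and "near_bipartite G"
    and "brick G"
    and "card (gV G) \<ge> 6"
  shows "has_K4_decomposition G \<longleftrightarrow> tri_ladder G"
proof -
  have ec: "three_edge_connected G"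
    using three_connected_imp_three_edge_connected[OF assms(1)] assms(4,5) unfolding brick_def by blast
  have ab: "almost_bipartite G" using near_bipartite_imp_almost_bipartite[OF assms(3)] .
  have "has_K4_decomposition G \<longleftrightarrow> K4_decomposable G" using has_K4_decomposition_iff[OF assms(1)] .
  also have "\<dots> \<longleftrightarrow> tri_ladder G"
    using K4_decomposable_imp_tri_ladder[OF assms(1,2) ec ab] tri_ladder_imp_K4_decomposable[OF _ assms(1)]
      assms(5) by auto
  finally show ?thesis .
qed

end
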